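(* Consider the gossip dynamics with stubborn agents and block communication probabilities described in the context (with $0<n_{r1}\le n_1$, $0<n_{r2}\le n_2$, $n_{r1}+n_{r2}<n$, $w_s,w_d>0$, $w_s\neq w_d$, $w_s(n_1^2+n_2^2)+2w_dn_1n_2=1$, and fixed stubborn initial vector $x^s(0)$). Then: (i) $x^r(t)$ converges in distribution to a unique invariant distribution; (ii) for any fixed initial vector $x(0)$, $I-\bar A$ is invertible, $$\lim_{t\to\infty}\mathbb{E}\{x^r(t)\}=(I-\bar A)^{-1}\bar B x^s(0)=:\mathbf{x}^r,$$ and $$\lim_{t\to\infty}\frac1t\sum_{i=0}^{t-1}x^r(i)=\mathbf{x}^r\quad\text{almost surely}.$$
   Context: Agents $\mathcal{V}=\{1,\dots,n\}$, $n=n_1+n_2$, form two communities $\mathcal{V}_1=\{1,\dots,n_1\}$, $\mathcal{V}_2=\{n_1+1,\dots,n\}$; community $k$ consists of $n_{rk}$ regular agents $\mathcal{V}_{rk}$ and $n_{sk}=n_k-n_{rk}$ stubborn agents $\mathcal{V}_{sk}$; $\mathcal{V}_r=\mathcal{V}_{r1}\cup\mathcal{V}_{r2}$, $\mathcal{V}_s=\mathcal{V}_{s1}\cup\mathcal{V}_{s2}$. Let $w_{ij}=w_s$ if $i,j$ are in the same community and $w_{ij}=w_d$ otherwise. For $i,j\in\mathcal{V}$ define $R^{ij}=I-\frac12(\mathbf{e}_i-\mathbf{e}_j)(\mathbf{e}_i-\mathbf{e}_j)^T$ if $i,j\in\mathcal{V}_r$; $R^{ij}=I-\frac12\mathbf{e}_i(\mathbf{e}_i-\mathbf{e}_j)^T$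 if $i\in\mathcal{V}_r,j\in\mathcal{V}_s$; $R^{ij}=I-\frac12\mathbf{e}_j(\mathbf{e}_j-\mathbf{e}_i)^T$ if $i\in\mathcal{V}_s,j\in\mathcal{V}_r$; $R^{ij}=I$ if $i,j\in\mathcal{V}_s$. At each time $t\in\mathbb{N}$, independently of the past, an ordered pair $(i,j)$ is drawn with probability $w_{ij}$ and $R(t)=R^{ij}$; states evolve by $x(t+1)=R(t)x(t)$ from fixed $x(0)$. With $x^r(t)$, $x^s(t)$ the stacked states of regular and stubborn agents, $x^s(t)\equiv x^s(0)$ and $x^r(t+1)=A(t)x^r(t)+B(t)x^s(t)$, where $(A(t)\ B(t))$ are the rows of $R(t)$ indexed by regular agents, columns split into regular ($A(t)$) and stubborn ($B(t)$) agents. $\bar A=\mathbb{E}\{A(t)\}$, $\bar B=\mathbb{E}\{B(t)\}$. *)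

theory Defs
  imports "HOL-Probability.Probability" "HOL-Analysis.Analysis"
begin

text \<open>Agents: the type 'r + 's, where Inl k are the regular agents and Inr k the stubborn ones.
  A community structure is given by the set c1 of agents of community 1 (community 2 is its
  complement).\<close>

fun is_reg :: "'r + 's \<Rightarrow> bool" where
  "is_reg (Inl _) = True"
| "is_reg (Inr _) = False"

definition ev :: "'n::finite \<Rightarrow> real^'n" where
  "ev i = axis i 1"

definition outer :: "real^'n \<Rightarrow> real^'m \<Rightarrow> real^'m^'n" where
  "outer u v = (\<chi> a b. u $ a * v $ b)"

definition Rmat :: "('r::finite + 's::finite) \<Rightarrow> ('r + 's) \<Rightarrow> real^('r + 's)^('r + 's)" where
  "Rmat i j =
     (if is_reg i \<and> is_reg j then mat 1 - (1/2) *\<^sub>R outer (ev i - ev j) (ev i - ev j)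
      else if is_reg i \<and> \<not> is_reg j then mat 1 - (1/2) *\<^sub>R outer (ev i) (ev i - ev j)
      else if \<not> is_reg i \<and> is_reg j then mat 1 - (1/2) *\<^sub>R outer (ev j) (ev j - ev i)
      else mat 1)"

definition wgt :: "'v set \<Rightarrow> real \<Rightarrow> real \<Rightarrow> 'v \<Rightarrow> 'v \<Rightarrow> real" where
  "wgt c1 ws wd i j = (if (i \<in> c1 \<longleftrightarrow> j \<in> c1) then ws else wd)"

definition Amat :: "real^('r::finite + 's::finite)^('r + 's) \<Rightarrow> real^'r^'r" where
  "Amat R = (\<chi> k l. R $ Inl k $ Inl l)"

definition Bmat :: "real^('r::finite + 's::finite)^('r + 's) \<Rightarrow> real^'s^'r" where
  "Bmat R = (\<chi> k l. R $ Inl k $ Inr l)"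

definition reg_part :: "real^('r::finite + 's::finite) \<Rightarrow> real^'r" where
  "reg_part x = (\<chi> k. x $ Inl k)"

definition stub_part :: "real^('r::finite + 's::finite) \<Rightarrow> real^'s" where
  "stub_part x = (\<chi> k. x $ Inr k)"

fun xproc :: "real^('r::finite + 's::finite) \<Rightarrow> (('r + 's) \<times> ('r + 's)) stream \<Rightarrow> nat \<Rightarrow> real^('r + 's)" where
  "xproc x0 \<omega> 0 = x0"
| "xproc x0 \<omega> (Suc t) = Rmat (fst (\<omega> !! t)) (snd (\<omega> !! t)) *v xproc x0 \<omega> t"

definition invariant_distr :: "'p pmf \<Rightarrow> ('p \<Rightarrow> 'x::topological_space \<Rightarrow> 'x) \<Rightarrow> 'x measure \<Rightarrow> bool" where
  "invariant_distr P F \<mu> \<longleftrightarrow> prob_space \<mu> \<and> sets \<mu> = sets borel \<and>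
     (\<forall>S \<in> sets borel. emeasure \<mu> S = (\<integral>\<^sup>+ y. emeasure (measure_pmf P) {p. F p y \<in> S} \<partial>\<mu>))"

definition conv_in_distr :: "'a measure \<Rightarrow> (nat \<Rightarrow> 'a \<Rightarrow> 'x::topological_space) \<Rightarrow> 'x measure \<Rightarrow> bool" where
  "conv_in_distr M X \<mu> \<longleftrightarrow>
     (\<forall>f :: 'x \<Rightarrow> real. continuous_on UNIV f \<and> bounded (range f) \<longrightarrow>
        (\<lambda>t. \<integral>\<omega>. f (X t \<omega>) \<partial>M) \<longlonglongrightarrow> (\<integral>y. f y \<partial>\<mu>))"

end

theory Submission
  imports Defs "HOL-Library.Discrete_Functions"
begin

(* The regular states obey the random affine recursion y(t+1) = A(t) y(t) + B(t) x\<^sup>s with i.i.d.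
   coefficients.  Each A(t) is substochastic and every regular agent meets a stubborn one with
   positive probability, so the mean matrix Abar has row sums at most \<rho> < 1.  Hence the backward
   iterates F(\<omega>\<^sub>0) (F(\<omega>\<^sub>1) ( ... F(\<omega>\<^sub>t\<^sub>-\<^sub>1) y)) converge almost surely, whatever y:
   their sensitivity to y is the product A(\<omega>\<^sub>0) ... A(\<omega>\<^sub>t\<^sub>-\<^sub>1) 1, whose mean is at most \<rho>^t.
   The law of the limit is invariant, and since forward and backward iterates have the same law
   at each time, it is the limit in distribution of y(t); the iterated Markov operator carries
   any invariant law to it, which gives uniqueness.  The mean solves the contracting recursion
   m(t+1) = Abar m(t) + Bbar x\<^sup>s.  Finally
   (I - Abar) (y(0) + ... + y(t-1)) = t Bbar x\<^sup>s + y(0) - y(t) + M(t) for a martingale M with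
   bounded increments; its second moment is O(t), so M(q\<^sup>2)/q\<^sup>2 \<rightarrow> 0 almost surely by a
   Borel-Cantelli argument, and the bounded increments fill the gaps between squares. *)

lemma (in prob_space) integral_stream_space:
  fixes f :: "_ \<Rightarrow> 'b::{banach, second_countable_topology}"
  assumes f[measurable]: "f \<in> borel_measurable (stream_space M)"
    and int: "integrable (stream_space M) f"
  shows "(\<integral>X. f X \<partial>stream_space M) = (\<integral>x. (\<integral>X. f (x ## X) \<partial>stream_space M) \<partial>M)"
proof -
  interpret S: sequence_space M ..
  interpret P: pair_sigma_finite M "\<Pi>\<^sub>M i::nat\<in>UNIV. M" ..
  have i1: "integrable S.S (\<lambda>X. f (to_stream X))"
    using int by (subst (asm) stream_space_eq_distr) (simp add: integrable_distr_eq)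
  have i2: "integrable (M \<Otimes>\<^sub>M S.S) (\<lambda>X. f (to_stream ((\<lambda>(s, \<omega>). case_nat s \<omega>) X)))"
    using i1 by (subst (asm) S.PiM_iter[symmetric]) (simp add: integrable_distr_eq)
  have "(\<integral>X. f X \<partial>stream_space M) = (\<integral>X. f (to_stream X) \<partial>S.S)"
    by (subst stream_space_eq_distr) (simp add: integral_distr)
  also have "\<dots> = (\<integral>X. f (to_stream ((\<lambda>(s, \<omega>). case_nat s \<omega>) X)) \<partial>(M \<Otimes>\<^sub>M S.S))"
    by (subst S.PiM_iter[symmetric]) (simp add: integral_distr)
  also have "\<dots> = (\<integral>x. \<integral>X. f (to_stream ((\<lambda>(s, \<omega>). case_nat s \<omega>) (x, X))) \<partial>S.S \<partial>M)"
    by (subst P.integral_fst'[OF i2]) simp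
  also have "\<dots> = (\<integral>x. \<integral>X. f (x ## to_stream X) \<partial>S.S \<partial>M)"
    by (auto intro!: Bochner_Integration.integral_cong simp: to_stream_nat_case)
  also have "\<dots> = (\<integral>x. \<integral>X. f (x ## X) \<partial>stream_space M \<partial>M)"
    by (subst stream_space_eq_distr)
       (simp add: integral_distr cong: Bochner_Integration.integral_cong)
  finally show ?thesis .
qed

lemma (in prob_space) AE_summable_of_summable_expectation:
  fixes X :: "nat \<Rightarrow> 'a \<Rightarrow> real"
  assumes [measurable]: "\<And>n. X n \<in> borel_measurable M"
    and nonneg: "\<And>n x. 0 \<le> X n x"
    and int: "\<And>n. integrable M (X n)"
    and summable: "summable (\<lambda>n. expectation (X n))"
  shows "AE x in M. summable (\<lambda>n. X n x)"
proof -
  have "(\<integral>\<^sup>+x. (\<Sum>n. ennreal (X n x)) \<partial>M) = (\<Sum>n. \<integral>\<^sup>+x. ennreal (X n x) \<partial>M)"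
    by (rule nn_integral_suminf) measurable
  also have "\<dots> = (\<Sum>n. ennreal (expectation (X n)))"
    by (intro suminf_cong nn_integral_eq_integral int) (auto simp: nonneg)
  also have "\<dots> = ennreal (\<Sum>n. expectation (X n))"
    by (intro suminf_ennreal2 summable integral_nonneg_AE) (simp add: nonneg)
  finally have "(\<integral>\<^sup>+x. (\<Sum>n. ennreal (X n x)) \<partial>M) \<noteq> \<infinity>"
    by simp
  then have "AE x in M. (\<Sum>n. ennreal (X n x)) \<noteq> \<infinity>"
    by (intro nn_integral_PInf_AE) measurable
  then show ?thesis
    by eventually_elim (rule summable_suminf_not_top[OF nonneg], simp)
qed

lemma LIMSEQ_infdist_cutoff_indicator:
  fixes C :: "'a::metric_space set"
  assumes "closed C" "C \<noteq> {}"
  shows "(\<lambda>m. max 0 (1 - real (Suc m) * infdist x C)) \<longlonglongrightarrow> indicator C x"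
proof (cases "x \<in> C")
  case True
  then have "infdist x C = 0"
    using assms in_closed_iff_infdist_zero by blast
  then show ?thesis using True by simp
next
  case False
  then have d: "infdist x C > 0"
    using assms in_closed_iff_infdist_zero infdist_nonneg by (metis order_neq_le_trans)
  obtain N :: nat where N: "1 / infdist x C < N"
    using reals_Archimedean2 by blast
  have "eventually (\<lambda>m. max 0 (1 - real (Suc m) * infdist x C) = 0) sequentially"
    unfolding eventually_sequentially
  proof (intro exI allI impI)
    fix m assume "N \<le> m"
    then have "1 / infdist x C < real (Suc m)" using N by linarith
    then show "max 0 (1 - real (Suc m) * infdist x C) = 0" using d by (simp add: field_simps)
  qed
  then show ?thesis using False by (simp add: tendsto_eventually)
qed

text \<open>The closed sets form an Int-stable generator of the Borel sets, and the continuous cut-offs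
  above approximate their indicators.\<close>

lemma measure_eqI_continuous_integral:
  fixes M N :: "'a::metric_space measure"
  assumes M: "prob_space M" "sets M = sets borel"
    and N: "prob_space N" "sets N = sets borel"
    and eq: "\<And>g :: 'a \<Rightarrow> real. continuous_on UNIV g \<Longrightarrow> (\<And>x. 0 \<le> g x \<and> g x \<le> 1) \<Longrightarrow>
               (\<integral>x. g x \<partial>M) = (\<integral>x. g x \<partial>N)"
  shows "M = N"
proof -
  have closed_eq: "emeasure M C = emeasure N C" if C: "closed C" for C
  proof (cases "C = {}")
    case True then show ?thesis by simp
  next
    case False
    define g where "g m x = max 0 (1 - real (Suc m) * infdist x C)" for m x
    have g_cont: "continuous_on UNIV (g m)" for m
      unfolding g_def by (intro continuous_intros)
    have g_01: "0 \<le> g m x \<and> g m x \<le> 1" for m x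
      unfolding g_def using infdist_nonneg[of x C] by (auto simp: max_def)
    have lim: "(\<lambda>m. \<integral>x. g m x \<partial>L) \<longlonglongrightarrow> measure L C"
      if L: "prob_space L" "sets L = sets borel" for L
    proof -
      interpret prob_space L by (rule L(1))
      have "(\<lambda>m. \<integral>x. g m x \<partial>L) \<longlonglongrightarrow> (\<integral>x. indicator C x \<partial>L)"
      proof (rule integral_dominated_convergence[where w="\<lambda>_. 1"])
        show "indicator C \<in> borel_measurable L"
          using borel_closed[OF C] L(2) by (simp add: borel_measurable_indicator_iff)
        show "g m \<in> borel_measurable L" for m
          using borel_measurable_continuous_onI[OF g_cont] measurable_cong_sets[OF L(2) refl] by blast
        show "AE x in L. (\<lambda>m. g m x) \<longlonglongrightarrow> indicator C x"
          unfolding g_def using LIMSEQ_infdist_cutoff_indicator[OF C False] by simp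
        show "AE x in L. norm (g m x) \<le> 1" for m
          using g_01 by simp
      qed simp
      also have "(\<integral>x. indicator C x \<partial>L) = measure L C"
        using sets_eq_imp_space_eq[OF L(2)] by simp
      finally show ?thesis .
    qed
    have "(\<lambda>m. \<integral>x. g m x \<partial>M) = (\<lambda>m. \<integral>x. g m x \<partial>N)"
      using eq[OF g_cont g_01] by simp
    then have "measure M C = measure N C"
      using LIMSEQ_unique[OF lim[OF M]] lim[OF N] by metis
    then show ?thesis
      using finite_measure.emeasure_eq_measure[OF prob_space.finite_measure[OF M(1)]]
        finite_measure.emeasure_eq_measure[OF prob_space.finite_measure[OF N(1)]] by simp
  qed
  show ?thesis
  proof (rule measure_eqI_generator_eq[where E="Collect closed" and \<Omega>=UNIV and A="\<lambda>_. UNIV"])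
    show "sets M = sigma_sets UNIV (Collect closed)" "sets N = sigma_sets UNIV (Collect closed)"
      using M(2) N(2) by (simp_all add: borel_eq_closed)
    show "emeasure M UNIV \<noteq> \<infinity>"
      using prob_space.emeasure_space_1[OF M(1)] sets_eq_imp_space_eq[OF M(2)] by simp
  qed (auto simp: Int_stable_def closed_eq)
qed

text \<open>The subsequence of squares controls the whole sequence: between \<open>q\<^sup>2\<close> and
  \<open>(q + 1)\<^sup>2\<close> there are only \<open>2 q\<close> steps, each of size at most \<open>B\<close>.\<close>

lemma LIMSEQ_div_of_squares:
  fixes a :: "nat \<Rightarrow> real"
  assumes incr: "\<And>t. \<bar>a (Suc t) - a t\<bar> \<le> B"
    and squares: "(\<lambda>q. a (q\<^sup>2) / real (q\<^sup>2)) \<longlonglongrightarrow> 0"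
  shows "(\<lambda>t. a t / real t) \<longlonglongrightarrow> 0"
proof -
  define q where "q t = floor_sqrt t" for t
  have q_top: "filterlim q at_top sequentially"
  proof (subst filterlim_at_top, intro allI)
    fix Z
    show "eventually (\<lambda>t. Z \<le> q t) sequentially"
      unfolding eventually_sequentially q_def by (intro exI[of _ "Z\<^sup>2"] allI impI le_floor_sqrtI)
  qed
  have drift: "\<bar>a t - a s\<bar> \<le> B * real (t - s)" if "s \<le> t" for s t
  proof -
    have "a t - a s = (\<Sum>i=s..<t. a (Suc i) - a i)"
      using that by (simp add: sum_Suc_diff')
    also have "\<bar>\<dots>\<bar> \<le> (\<Sum>i=s..<t. B)"
      by (rule order_trans[OF sum_abs sum_mono]) (rule incr)
    finally show ?thesis by (simp add: mult.commute)
  qed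
  have bound: "\<bar>a t / real t\<bar> \<le> \<bar>a ((q t)\<^sup>2) / real ((q t)\<^sup>2)\<bar> + 2 * B / real (q t)"
    if "t \<ge> 1" for t
  proof -
    have sq: "(q t)\<^sup>2 \<le> t" "t < (Suc (q t))\<^sup>2"
      unfolding q_def by (rule floor_sqrt_power2_le, rule Suc_floor_sqrt_power2_gt)
    then have gap: "t - (q t)\<^sup>2 \<le> 2 * q t"
      by (simp add: power2_eq_square)
    have q_pos: "q t > 0"
      using that by (simp add: q_def)
    have B_nonneg: "0 \<le> B"
      using incr[of 0] by linarith
    have "\<bar>a t\<bar> \<le> \<bar>a ((q t)\<^sup>2)\<bar> + B * real (t - (q t)\<^sup>2)"
      using drift[OF sq(1)] by linarith
    also have "\<dots> \<le> \<bar>a ((q t)\<^sup>2)\<bar> + 2 * B * real (q t)"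
    proof -
      have "real (t - (q t)\<^sup>2) \<le> real (2 * q t)"
        using gap by (simp only: of_nat_le_iff)
      then show ?thesis
        using B_nonneg mult_left_mono by fastforce
    qed
    finally have num: "\<bar>a t\<bar> \<le> \<bar>a ((q t)\<^sup>2)\<bar> + 2 * B * real (q t)" .
    have "\<bar>a t\<bar> / real t \<le> (\<bar>a ((q t)\<^sup>2)\<bar> + 2 * B * real (q t)) / real ((q t)\<^sup>2)"
      by (rule frac_le[OF _ num]) (use B_nonneg q_pos sq(1) in \<open>simp_all\<close>)
    also have "\<dots> = \<bar>a ((q t)\<^sup>2) / real ((q t)\<^sup>2)\<bar> + 2 * B / real (q t)"
      using q_pos by (simp add: field_simps power2_eq_square)
    finally show ?thesis by simp
  qed
  have "(\<lambda>t. \<bar>a ((q t)\<^sup>2) / real ((q t)\<^sup>2)\<bar> + 2 * B / real (q t)) \<longlonglongrightarrow> 0"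
  proof (rule tendsto_add_zero)
    show "(\<lambda>t. \<bar>a ((q t)\<^sup>2) / real ((q t)\<^sup>2)\<bar>) \<longlonglongrightarrow> 0"
      using tendsto_rabs_zero[OF filterlim_compose[OF squares q_top]] by simp
    show "(\<lambda>t. 2 * B / real (q t)) \<longlonglongrightarrow> 0"
      by (intro tendsto_divide_0[OF tendsto_const] filterlim_at_top_imp_at_infinity
          filterlim_compose[OF filterlim_real_sequentially q_top])
  qed
  then show ?thesis
    by (rule Lim_null_comparison[rotated])
       (use bound in \<open>auto simp: eventually_sequentially intro!: exI[of _ 1]\<close>)
qed

lemma integral_measure_pmf_finite:
  fixes P :: "'p::finite pmf" and f :: "'p \<Rightarrow> 'b::{banach, second_countable_topology}"
  shows "measure_pmf.expectation P f = (\<Sum>p\<in>UNIV. pmf P p *\<^sub>R f p)"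
  by (rule integral_measure_pmf) auto

lemma measurable_vec_nth[measurable (raw)]:
  "f \<in> borel_measurable M \<Longrightarrow> (\<lambda>x. (f x :: real^'n) $ k) \<in> borel_measurable M"
  by (rule measurable_compose[OF _ borel_measurable_continuous_onI]) (auto intro: continuous_intros)

lemma matrix_inv_inverse:
  fixes M :: "'a::semiring_1^'n^'m"
  assumes "invertible M"
  shows "M ** matrix_inv M = mat 1" "matrix_inv M ** M = mat 1"
  using someI_ex[OF assms[unfolded invertible_def]] unfolding matrix_inv_def by auto

lemma sum_scaleR_matrix_vector_mult:
  fixes M :: "'p \<Rightarrow> real^'m^'n"
  shows "(\<Sum>p\<in>S. a p *\<^sub>R M p) *v v = (\<Sum>p\<in>S. a p *\<^sub>R (M p *v v))"
proof (cases "finite S")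
  case True
  then show ?thesis
    by (induction S rule: finite_induct)
       (simp_all add: matrix_vector_mult_add_rdistrib scaleR_matrix_vector_assoc)
qed simp

definition in_cube :: "real \<Rightarrow> real^'n \<Rightarrow> bool" where
  "in_cube r y \<longleftrightarrow> (\<forall>k. \<bar>y $ k\<bar> \<le> r)"

lemma in_cube_norm: "in_cube (norm y) y"
  by (simp add: in_cube_def component_le_norm_cart)

lemma in_cube_mono: "in_cube r y \<Longrightarrow> r \<le> r' \<Longrightarrow> in_cube r' y"
  by (auto simp: in_cube_def intro: order_trans)

lemma norm_le_in_cube: "in_cube r (v::real^'n) \<Longrightarrow> norm v \<le> real CARD('n) * r"
proof -
  assume "in_cube r v"
  then have "(\<Sum>i\<in>UNIV. \<bar>v $ i\<bar>) \<le> (\<Sum>i\<in>(UNIV::'n set). r)"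
    unfolding in_cube_def by (intro sum_mono) blast
  then show ?thesis
    using norm_le_l1_cart[of v] by simp
qed


section \<open>Random affine recursions that contract in mean\<close>

text \<open>Each map \<open>y \<mapsto> A p y + c p\<close> sends every cube of radius \<open>r \<ge> r0\<close> into itself (\<open>c p\<close> only
  fills the row mass missing from \<open>A p\<close>), and in mean the recursion contracts the sup norm by
  the factor \<open>\<rho>\<close>.\<close>

locale iid_affine_recursion =
  fixes P :: "'p::finite pmf" and A :: "'p \<Rightarrow> real^'n::finite^'n" and c :: "'p \<Rightarrow> real^'n"
    and r0 :: real and \<rho> :: real
  assumes A_nonneg: "\<And>p k l. 0 \<le> A p $ k $ l"
    and A_rowsum_le: "\<And>p k. (\<Sum>l\<in>UNIV. A p $ k $ l) \<le> 1"
    and c_bound: "\<And>p k. \<bar>c p $ k\<bar> \<le> (1 - (\<Sum>l\<in>UNIV. A p $ k $ l)) * r0"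
    and r0_nonneg: "0 \<le> r0"
    and rho_less_1: "\<rho> < 1"
    and mean_A_rowsum_le: "\<And>k. (\<Sum>p\<in>UNIV. pmf P p * (\<Sum>l\<in>UNIV. A p $ k $ l)) \<le> \<rho>"
begin

definition F :: "'p \<Rightarrow> real^'n \<Rightarrow> real^'n" where
  "F p y = A p *v y + c p"

definition \<Omega> :: "'p stream measure" where
  "\<Omega> = stream_space (measure_pmf P)"

definition Abar :: "real^'n^'n" where
  "Abar = (\<Sum>p\<in>UNIV. pmf P p *\<^sub>R A p)"

definition cbar :: "real^'n" where
  "cbar = (\<Sum>p\<in>UNIV. pmf P p *\<^sub>R c p)"

text \<open>Forward iteration applies \<open>F (\<omega> !! 0)\<close> first, backward iteration applies it last.
  Both have the same law at each time, but only the backward iterates converge pointwise.\<close>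

fun fwd :: "nat \<Rightarrow> real^'n \<Rightarrow> 'p stream \<Rightarrow> real^'n" where
  "fwd 0 y \<omega> = y"
| "fwd (Suc t) y \<omega> = fwd t (F (shd \<omega>) y) (stl \<omega>)"

fun bwd :: "nat \<Rightarrow> real^'n \<Rightarrow> 'p stream \<Rightarrow> real^'n" where
  "bwd 0 y \<omega> = y"
| "bwd (Suc t) y \<omega> = F (shd \<omega>) (bwd t y (stl \<omega>))"

definition markov_op :: "(real^'n \<Rightarrow> real) \<Rightarrow> real^'n \<Rightarrow> real" where
  "markov_op g y = (\<Sum>p\<in>UNIV. pmf P p * g (F p y))"

lemma prob_space_\<Omega>: "prob_space \<Omega>"
  unfolding \<Omega>_def by (rule prob_space.prob_space_stream_space) (rule prob_space_measure_pmf)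

lemma space_\<Omega>[simp]: "space \<Omega> = UNIV"
  by (simp add: \<Omega>_def space_stream_space)

lemma measure_\<Omega>_UNIV[simp]: "measure \<Omega> UNIV = 1"
  using prob_space.prob_space[OF prob_space_\<Omega>] by simp

lemma sum_pmf_UNIV: "(\<Sum>p\<in>UNIV. pmf P p) = 1"
  using sum_pmf_eq_1[of UNIV P] by simp

lemma measurable_snth_\<Omega>: "(\<lambda>\<omega>. \<omega> !! n) \<in> measurable \<Omega> (count_space UNIV)"
proof -
  have "(\<lambda>\<omega>. \<omega> !! n) \<in> measurable \<Omega> (measure_pmf P)"
    unfolding \<Omega>_def by measurable
  then show ?thesis by (simp add: measurable_def)
qed

lemma measurable_stl_\<Omega>: "stl \<in> measurable \<Omega> \<Omega>"
  unfolding \<Omega>_def by measurable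

lemma measurable_by_snth:
  assumes "\<And>p. (\<lambda>\<omega>. f p \<omega>) \<in> measurable \<Omega> N"
  shows "(\<lambda>\<omega>. f (\<omega> !! n) \<omega>) \<in> measurable \<Omega> N"
  by (rule measurable_compose_countable'[OF assms measurable_snth_\<Omega>]) auto

lemma measurable_by_shd:
  assumes "\<And>p. (\<lambda>\<omega>. f p \<omega>) \<in> measurable \<Omega> N"
  shows "(\<lambda>\<omega>. f (shd \<omega>) \<omega>) \<in> measurable \<Omega> N"
  using measurable_by_snth[of f N 0, OF assms] by simp

lemma continuous_on_F: "continuous_on UNIV (F p)"
  unfolding F_def[abs_def] by (intro continuous_intros matrix_vector_mult_linear_continuous_on)

lemma measurable_F[measurable]: "F p \<in> borel_measurable borel"
  by (rule borel_measurable_continuous_onI[OF continuous_on_F])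

lemma measurable_fwd: "(\<lambda>\<omega>. fwd t y \<omega>) \<in> borel_measurable \<Omega>"
proof (induction t arbitrary: y)
  case 0
  show ?case by simp
next
  case (Suc t)
  have "(\<lambda>\<omega>. fwd t (F p y) (stl \<omega>)) \<in> borel_measurable \<Omega>" for p
    using measurable_compose[OF measurable_stl_\<Omega> Suc] .
  then show ?case
    using measurable_by_shd[where f="\<lambda>p \<omega>. fwd t (F p y) (stl \<omega>)"] by simp
qed

lemma measurable_bwd: "(\<lambda>\<omega>. bwd t y \<omega>) \<in> borel_measurable \<Omega>"
proof (induction t)
  case 0
  show ?case by simp
next
  case (Suc t)
  have "(\<lambda>\<omega>. F p (bwd t y (stl \<omega>))) \<in> borel_measurable \<Omega>" for p
    using measurable_compose[OF measurable_compose[OF measurable_stl_\<Omega> Suc] measurable_F] .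
  then show ?case
    using measurable_by_shd[where f="\<lambda>p \<omega>. F p (bwd t y (stl \<omega>))"] by simp
qed

lemma integrable_\<Omega>_bounded:
  fixes f :: "'p stream \<Rightarrow> 'b::{banach, second_countable_topology}"
  assumes "f \<in> borel_measurable \<Omega>" "\<And>\<omega>. norm (f \<omega>) \<le> B"
  shows "integrable \<Omega> f"
proof -
  interpret prob_space \<Omega> by (rule prob_space_\<Omega>)
  show ?thesis using assms by (intro integrable_const_bound[where B=B]) auto
qed

lemma integral_\<Omega>_first_step:
  fixes f :: "'p stream \<Rightarrow> 'b::{banach, second_countable_topology}"
  assumes "f \<in> borel_measurable \<Omega>" "integrable \<Omega> f"
  shows "(\<integral>\<omega>. f \<omega> \<partial>\<Omega>) = (\<Sum>p\<in>UNIV. pmf P p *\<^sub>R (\<integral>\<omega>. f (p ## \<omega>) \<partial>\<Omega>))"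
proof -
  have "(\<integral>\<omega>. f \<omega> \<partial>\<Omega>) = (\<integral>p. (\<integral>\<omega>. f (p ## \<omega>) \<partial>\<Omega>) \<partial>measure_pmf P)"
    using prob_space.integral_stream_space[OF prob_space_measure_pmf, of f P] assms
    unfolding \<Omega>_def by simp
  also have "\<dots> = (\<Sum>p\<in>UNIV. pmf P p *\<^sub>R (\<integral>\<omega>. f (p ## \<omega>) \<partial>\<Omega>))"
    by (rule integral_measure_pmf_finite)
  finally show ?thesis .
qed

lemma A_mult_abs_le: "\<bar>(A p *v v) $ k\<bar> \<le> (\<Sum>l\<in>UNIV. A p $ k $ l * \<bar>v $ l\<bar>)"
proof -
  have "\<bar>(A p *v v) $ k\<bar> \<le> (\<Sum>l\<in>UNIV. \<bar>A p $ k $ l * v $ l\<bar>)"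
    unfolding matrix_vector_mult_def by (simp add: sum_abs)
  also have "\<dots> = (\<Sum>l\<in>UNIV. A p $ k $ l * \<bar>v $ l\<bar>)"
    using A_nonneg by (simp add: abs_mult)
  finally show ?thesis .
qed

lemma A_mult_in_cube_le: "in_cube r v \<Longrightarrow> \<bar>(A p *v v) $ k\<bar> \<le> (\<Sum>l\<in>UNIV. A p $ k $ l) * r"
proof -
  assume "in_cube r v"
  then have "(\<Sum>l\<in>UNIV. A p $ k $ l * \<bar>v $ l\<bar>) \<le> (\<Sum>l\<in>UNIV. A p $ k $ l * r)"
    by (intro sum_mono mult_left_mono) (auto simp: in_cube_def A_nonneg)
  then show ?thesis
    using A_mult_abs_le[of p v k] by (simp add: sum_distrib_right)
qed

lemma in_cube_F:
  assumes "r0 \<le> r" "in_cube r y"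
  shows "in_cube r (F p y)"
  unfolding in_cube_def
proof
  fix k
  let ?s = "\<Sum>l\<in>UNIV. A p $ k $ l"
  have "\<bar>F p y $ k\<bar> \<le> \<bar>(A p *v y) $ k\<bar> + \<bar>c p $ k\<bar>"
    by (simp add: F_def abs_triangle_ineq)
  also have "\<dots> \<le> ?s * r + (1 - ?s) * r0"
    using A_mult_in_cube_le[OF assms(2)] c_bound by (intro add_mono) auto
  also have "\<dots> \<le> ?s * r + (1 - ?s) * r"
    using A_rowsum_le[of p k] assms(1) by (simp add: mult_left_mono)
  finally show "\<bar>F p y $ k\<bar> \<le> r"
    by (simp add: algebra_simps)
qed

lemma in_cube_c: "in_cube r0 (c p)"
  using in_cube_F[of r0 0 p] r0_nonneg by (simp add: F_def in_cube_def)

lemma in_cube_fwd: "r0 \<le> r \<Longrightarrow> in_cube r y \<Longrightarrow> in_cube r (fwd t y \<omega>)"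
  by (induction t arbitrary: y \<omega>) (auto simp: in_cube_F)

lemma in_cube_start:
  obtains r where "r0 \<le> r" "in_cube r y"
  using in_cube_mono[OF in_cube_norm, of y "r0 + norm y"] r0_nonneg
  by (intro that[of "r0 + norm y"]) auto

lemma measurable_markov_op: "g \<in> borel_measurable borel \<Longrightarrow> markov_op g \<in> borel_measurable borel"
  unfolding markov_op_def[abs_def]
  by (intro borel_measurable_sum borel_measurable_times measurable_const)
     (auto intro: measurable_compose[OF measurable_F])

lemma markov_op_bounded: "(\<And>y. \<bar>g y\<bar> \<le> B) \<Longrightarrow> \<bar>markov_op g y\<bar> \<le> B"
proof -
  assume g: "\<And>y. \<bar>g y\<bar> \<le> B"
  have "\<bar>markov_op g y\<bar> \<le> (\<Sum>p\<in>UNIV. pmf P p * B)"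
    unfolding markov_op_def
    by (rule order_trans[OF sum_abs sum_mono]) (auto simp: abs_mult intro: mult_left_mono g)
  also have "\<dots> = B"
    by (simp add: sum_distrib_right[symmetric] sum_pmf_UNIV)
  finally show ?thesis .
qed

lemma measurable_markov_op_pow:
  "g \<in> borel_measurable borel \<Longrightarrow> (markov_op ^^ t) g \<in> borel_measurable borel"
  by (induction t) (auto simp: measurable_markov_op)

lemma markov_op_pow_bounded: "(\<And>y. \<bar>g y\<bar> \<le> B) \<Longrightarrow> \<bar>(markov_op ^^ t) g y\<bar> \<le> B"
  by (induction t arbitrary: y) (auto intro: markov_op_bounded)

lemma integrable_bounded_comp:
  fixes g :: "real^'n \<Rightarrow> real"
  assumes "g \<in> borel_measurable borel" "\<And>y. \<bar>g y\<bar> \<le> B" "h \<in> borel_measurable \<Omega>"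
  shows "integrable \<Omega> (\<lambda>\<omega>. g (h \<omega>))"
  by (rule integrable_\<Omega>_bounded[where B=B]) (use assms in auto)

lemma integral_fwd_markov_op:
  fixes g :: "real^'n \<Rightarrow> real"
  assumes g: "g \<in> borel_measurable borel" "\<And>y. \<bar>g y\<bar> \<le> B"
  shows "(\<integral>\<omega>. g (fwd t y \<omega>) \<partial>\<Omega>) = (markov_op ^^ t) g y"
proof (induction t arbitrary: y)
  case 0
  show ?case by simp
next
  case (Suc t)
  have "(\<integral>\<omega>. g (fwd (Suc t) y \<omega>) \<partial>\<Omega>)
        = (\<Sum>p\<in>UNIV. pmf P p *\<^sub>R (\<integral>\<omega>. g (fwd (Suc t) y (p ## \<omega>)) \<partial>\<Omega>))"
    by (intro integral_\<Omega>_first_step measurable_compose[OF measurable_fwd g(1)]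
        integrable_bounded_comp[OF g measurable_fwd])
  also have "\<dots> = (\<Sum>p\<in>UNIV. pmf P p * (markov_op ^^ t) g (F p y))"
    using Suc by simp
  also have "\<dots> = (markov_op ^^ Suc t) g y"
    by (simp add: markov_op_def)
  finally show ?case .
qed

lemma integral_bwd_markov_op:
  fixes g :: "real^'n \<Rightarrow> real"
  assumes "g \<in> borel_measurable borel" "\<And>y. \<bar>g y\<bar> \<le> B"
  shows "(\<integral>\<omega>. g (bwd t y \<omega>) \<partial>\<Omega>) = (markov_op ^^ t) g y"
  using assms
proof (induction t arbitrary: g B)
  case 0
  show ?case by simp
next
  case (Suc t)
  note g = Suc.prems
  have gF: "(\<lambda>y. g (F p y)) \<in> borel_measurable borel" for p
    using g(1) by measurable
  have int: "integrable \<Omega> (\<lambda>\<omega>. pmf P p * g (F p (bwd t y \<omega>)))" for p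
    by (intro integrable_mult_right integrable_bounded_comp[OF gF g(2)] measurable_bwd)
  have "(\<integral>\<omega>. g (bwd (Suc t) y \<omega>) \<partial>\<Omega>)
        = (\<Sum>p\<in>UNIV. pmf P p *\<^sub>R (\<integral>\<omega>. g (bwd (Suc t) y (p ## \<omega>)) \<partial>\<Omega>))"
    by (intro integral_\<Omega>_first_step measurable_compose[OF measurable_bwd g(1)]
        integrable_bounded_comp[OF g measurable_bwd])
  also have "\<dots> = (\<Sum>p\<in>UNIV. (\<integral>\<omega>. pmf P p * g (F p (bwd t y \<omega>)) \<partial>\<Omega>))"
    by simp
  also have "\<dots> = (\<integral>\<omega>. markov_op g (bwd t y \<omega>) \<partial>\<Omega>)"
    unfolding markov_op_def by (rule Bochner_Integration.integral_sum[symmetric]) (rule int)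
  also have "\<dots> = (markov_op ^^ t) (markov_op g) y"
    by (rule Suc.IH[OF measurable_markov_op[OF g(1)] markov_op_bounded[OF g(2)]])
  also have "\<dots> = (markov_op ^^ Suc t) g y"
    by (simp add: funpow_Suc_right del: funpow.simps)
  finally show ?case .
qed

lemma rho_nonneg: "0 \<le> \<rho>"
proof -
  fix k :: 'n
  have "0 \<le> (\<Sum>p\<in>UNIV. pmf P p * (\<Sum>l\<in>UNIV. A p $ k $ l))"
    by (intro sum_nonneg mult_nonneg_nonneg) (auto simp: A_nonneg)
  then show ?thesis
    using mean_A_rowsum_le[of k] by linarith
qed

text \<open>\<open>gain t \<omega> = A (\<omega> !! 0) \<cdots> A (\<omega> !! (t - 1)) 1\<close> bounds how strongly the \<open>t\<close>-step backward
  iterate depends on its starting point.\<close>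

fun gain :: "nat \<Rightarrow> 'p stream \<Rightarrow> real^'n" where
  "gain 0 \<omega> = (\<chi> k. 1)"
| "gain (Suc t) \<omega> = A (shd \<omega>) *v gain t (stl \<omega>)"

lemma gain_nonneg: "0 \<le> gain t \<omega> $ k"
  by (induction t arbitrary: \<omega> k)
     (auto simp: matrix_vector_mult_def intro!: sum_nonneg mult_nonneg_nonneg A_nonneg)

lemma gain_le_1: "gain t \<omega> $ k \<le> 1"
proof (induction t arbitrary: \<omega> k)
  case 0
  show ?case by simp
next
  case (Suc t)
  have "gain (Suc t) \<omega> $ k = (\<Sum>l\<in>UNIV. A (shd \<omega>) $ k $ l * gain t (stl \<omega>) $ l)"
    by (simp add: matrix_vector_mult_def)
  also have "\<dots> \<le> (\<Sum>l\<in>UNIV. A (shd \<omega>) $ k $ l * 1)"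
    by (intro sum_mono mult_left_mono Suc A_nonneg)
  also have "\<dots> \<le> 1"
    using A_rowsum_le by simp
  finally show ?case .
qed

lemma measurable_gain: "(\<lambda>\<omega>. gain t \<omega>) \<in> borel_measurable \<Omega>"
proof (induction t)
  case 0
  show ?case by simp
next
  case (Suc t)
  have "(\<lambda>\<omega>. A p *v gain t (stl \<omega>)) \<in> borel_measurable \<Omega>" for p
    by (rule measurable_compose[OF measurable_compose[OF measurable_stl_\<Omega> Suc]])
       (rule borel_measurable_continuous_onI, intro continuous_intros)
  then show ?case
    using measurable_by_shd[where f="\<lambda>p \<omega>. A p *v gain t (stl \<omega>)"] by simp
qed

lemma integrable_gain: "integrable \<Omega> (\<lambda>\<omega>. gain t \<omega> $ k)"
  by (rule integrable_\<Omega>_bounded[where B=1]) (use gain_nonneg gain_le_1 measurable_gain in auto)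

lemma integral_gain_le: "(\<integral>\<omega>. gain t \<omega> $ k \<partial>\<Omega>) \<le> \<rho> ^ t"
proof (induction t arbitrary: k)
  case 0
  show ?case by simp
next
  case (Suc t)
  have "(\<lambda>\<omega>. gain (Suc t) \<omega> $ k) \<in> borel_measurable \<Omega>"
    using measurable_gain by measurable
  then have "(\<integral>\<omega>. gain (Suc t) \<omega> $ k \<partial>\<Omega>)
        = (\<Sum>p\<in>UNIV. pmf P p *\<^sub>R (\<integral>\<omega>. gain (Suc t) (p ## \<omega>) $ k \<partial>\<Omega>))"
    by (rule integral_\<Omega>_first_step[OF _ integrable_gain])
  also have "\<dots> = (\<Sum>p\<in>UNIV. pmf P p * (\<integral>\<omega>. (\<Sum>l\<in>UNIV. A p $ k $ l * gain t \<omega> $ l) \<partial>\<Omega>))"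
    by (simp add: matrix_vector_mult_def)
  also have "\<dots> = (\<Sum>p\<in>UNIV. pmf P p * (\<Sum>l\<in>UNIV. A p $ k $ l * (\<integral>\<omega>. gain t \<omega> $ l \<partial>\<Omega>)))"
    by (simp add: Bochner_Integration.integral_sum integrable_gain)
  also have "\<dots> \<le> (\<Sum>p\<in>UNIV. pmf P p * (\<Sum>l\<in>UNIV. A p $ k $ l * \<rho> ^ t))"
    by (intro sum_mono mult_left_mono Suc A_nonneg) auto
  also have "\<dots> = (\<Sum>p\<in>UNIV. pmf P p * (\<Sum>l\<in>UNIV. A p $ k $ l)) * \<rho> ^ t"
    by (simp add: sum_distrib_right sum_distrib_left mult.assoc)
  also have "\<dots> \<le> \<rho> ^ Suc t"
    using mean_A_rowsum_le[of k] rho_nonneg by (simp add: mult_right_mono)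
  finally show ?case .
qed

lemma AE_summable_gain: "AE \<omega> in \<Omega>. \<forall>k. summable (\<lambda>t. gain t \<omega> $ k)"
proof -
  interpret prob_space \<Omega> by (rule prob_space_\<Omega>)
  have "AE \<omega> in \<Omega>. summable (\<lambda>t. gain t \<omega> $ k)" for k
  proof (rule AE_summable_of_summable_expectation)
    show "summable (\<lambda>t. expectation (\<lambda>\<omega>. gain t \<omega> $ k))"
    proof (rule summable_comparison_test'[OF summable_geometric[of \<rho>]])
      show "norm \<rho> < 1"
        using rho_nonneg rho_less_1 by simp
      show "norm (expectation (\<lambda>\<omega>. gain t \<omega> $ k)) \<le> \<rho> ^ t" for t
        using integral_gain_le[of t k] integral_nonneg_AE[of "\<lambda>\<omega>. gain t \<omega> $ k" \<Omega>] gain_nonneg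
        by simp
    qed
  qed (use measurable_gain gain_nonneg integrable_gain in auto)
  then show ?thesis
    by (simp add: AE_all_countable)
qed

lemma bwd_diff_le_gain:
  assumes "in_cube r (y - y')"
  shows "\<bar>bwd t y \<omega> $ k - bwd t y' \<omega> $ k\<bar> \<le> gain t \<omega> $ k * r"
proof (induction t arbitrary: \<omega> k)
  case 0
  show ?case using assms by (simp add: in_cube_def)
next
  case (Suc t)
  let ?v = "bwd t y (stl \<omega>) - bwd t y' (stl \<omega>)"
  have "bwd (Suc t) y \<omega> $ k - bwd (Suc t) y' \<omega> $ k = (A (shd \<omega>) *v ?v) $ k"
    by (simp add: F_def matrix_vector_mult_diff_distrib)
  also have "\<bar>\<dots>\<bar> \<le> (\<Sum>l\<in>UNIV. A (shd \<omega>) $ k $ l * \<bar>?v $ l\<bar>)"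
    by (rule A_mult_abs_le)
  also have "\<dots> \<le> (\<Sum>l\<in>UNIV. A (shd \<omega>) $ k $ l * (gain t (stl \<omega>) $ l * r))"
    using Suc by (intro sum_mono mult_left_mono A_nonneg) auto
  also have "\<dots> = gain (Suc t) \<omega> $ k * r"
    by (simp add: matrix_vector_mult_def sum_distrib_right mult.assoc)
  finally show ?case .
qed

lemma bwd_Suc_snth: "bwd (Suc t) y \<omega> = bwd t (F (\<omega> !! t) y) \<omega>"
  by (induction t arbitrary: \<omega>) auto

definition bwd_lim :: "'p stream \<Rightarrow> real^'n" where
  "bwd_lim \<omega> = lim (\<lambda>t. bwd t 0 \<omega>)"

lemma measurable_bwd_lim: "bwd_lim \<in> borel_measurable \<Omega>"
  unfolding bwd_lim_def by (intro borel_measurable_lim_metric measurable_bwd)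

text \<open>The increments \<open>bwd (t + 1) 0 - bwd t 0 = bwd t (c (\<omega> !! t)) - bwd t 0\<close> are dominated
  by \<open>r0 * gain t\<close>, so summable gains make the backward iterates converge, to a limit that
  does not depend on the starting point.\<close>

lemma LIMSEQ_bwd:
  assumes summable: "\<forall>k. summable (\<lambda>t. gain t \<omega> $ k)"
  shows "(\<lambda>t. bwd t y \<omega>) \<longlonglongrightarrow> bwd_lim \<omega>"
proof -
  define d where "d k i = bwd (Suc i) 0 \<omega> $ k - bwd i 0 \<omega> $ k" for k i
  have d_bound: "\<bar>d k i\<bar> \<le> gain i \<omega> $ k * r0" for k i
    using bwd_diff_le_gain[of r0 "F (\<omega> !! i) 0" 0 i \<omega> k] in_cube_c
    unfolding d_def bwd_Suc_snth by (simp add: F_def)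
  have "summable (d k)" for k
    by (rule summable_rabs_cancel,
        rule summable_comparison_test'[OF summable_mult2[OF summable[rule_format]]])
       (use d_bound in auto)
  moreover have "(\<Sum>i<t. d k i) = bwd t 0 \<omega> $ k" for k t
    unfolding d_def by (subst sum_lessThan_telescope) simp
  ultimately have "(\<lambda>t. bwd t 0 \<omega> $ k) \<longlonglongrightarrow> suminf (d k)" for k
    using summable_LIMSEQ[of "d k"] by simp
  then have "(\<lambda>t. bwd t 0 \<omega>) \<longlonglongrightarrow> (\<chi> k. suminf (d k))"
    by (intro vec_tendstoI) simp
  then have lim0: "(\<lambda>t. bwd t 0 \<omega>) \<longlonglongrightarrow> bwd_lim \<omega>"
    unfolding bwd_lim_def by (metis convergentI convergent_LIMSEQ_iff)
  have "(\<lambda>t. bwd t y \<omega> - bwd t 0 \<omega>) \<longlonglongrightarrow> 0"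
  proof (rule vec_tendstoI)
    fix k
    have "(\<lambda>t. gain t \<omega> $ k * norm y) \<longlonglongrightarrow> 0 * norm y"
      by (intro tendsto_mult tendsto_const summable_LIMSEQ_zero summable[rule_format])
    moreover have "\<bar>bwd t y \<omega> $ k - bwd t 0 \<omega> $ k\<bar> \<le> gain t \<omega> $ k * norm y" for t
      by (rule bwd_diff_le_gain) (simp add: in_cube_norm)
    ultimately show "(\<lambda>t. (bwd t y \<omega> - bwd t 0 \<omega>) $ k) \<longlonglongrightarrow> 0 $ k"
      by (auto intro: Lim_null_comparison[where g="\<lambda>t. gain t \<omega> $ k * norm y"])
  qed
  from tendsto_add[OF this lim0] show ?thesis
    by simp
qed

lemma AE_LIMSEQ_bwd: "AE \<omega> in \<Omega>. \<forall>y. (\<lambda>t. bwd t y \<omega>) \<longlonglongrightarrow> bwd_lim \<omega>"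
  using AE_summable_gain by eventually_elim (auto intro: LIMSEQ_bwd)

definition limit_law :: "(real^'n) measure" where
  "limit_law = distr \<Omega> borel bwd_lim"

lemma prob_space_limit_law: "prob_space limit_law"
  unfolding limit_law_def by (rule prob_space.prob_space_distr[OF prob_space_\<Omega> measurable_bwd_lim])

lemma sets_limit_law[measurable_cong]: "sets limit_law = sets borel"
  by (simp add: limit_law_def)

lemma integral_limit_law:
  "g \<in> borel_measurable borel \<Longrightarrow> (\<integral>y. g y \<partial>limit_law) = (\<integral>\<omega>. g (bwd_lim \<omega>) \<partial>\<Omega>)"
  for g :: "real^'n \<Rightarrow> real"
  unfolding limit_law_def by (rule integral_distr[OF measurable_bwd_lim])

lemma LIMSEQ_markov_op_pow:
  fixes g :: "real^'n \<Rightarrow> real"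
  assumes g_cont: "continuous_on UNIV g" and g_bounded: "\<And>y. \<bar>g y\<bar> \<le> B"
  shows "(\<lambda>t. (markov_op ^^ t) g y) \<longlonglongrightarrow> (\<integral>y. g y \<partial>limit_law)"
proof -
  interpret prob_space \<Omega> by (rule prob_space_\<Omega>)
  have g_meas: "g \<in> borel_measurable borel"
    by (rule borel_measurable_continuous_onI[OF g_cont])
  have "(\<lambda>t. \<integral>\<omega>. g (bwd t y \<omega>) \<partial>\<Omega>) \<longlonglongrightarrow> (\<integral>\<omega>. g (bwd_lim \<omega>) \<partial>\<Omega>)"
  proof (rule integral_dominated_convergence[where w="\<lambda>_. B"])
    show "(\<lambda>\<omega>. g (bwd_lim \<omega>)) \<in> borel_measurable \<Omega>"
      using measurable_compose[OF measurable_bwd_lim g_meas] .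
    show "(\<lambda>\<omega>. g (bwd t y \<omega>)) \<in> borel_measurable \<Omega>" for t
      using measurable_compose[OF measurable_bwd g_meas] .
    show "AE \<omega> in \<Omega>. (\<lambda>t. g (bwd t y \<omega>)) \<longlonglongrightarrow> g (bwd_lim \<omega>)"
      using AE_LIMSEQ_bwd
    proof eventually_elim
      case (elim \<omega>)
      then show ?case
        using g_cont by (auto intro: continuous_on_tendsto_compose)
    qed
  qed (use g_bounded in auto)
  then show ?thesis
    using integral_bwd_markov_op[OF g_meas g_bounded] integral_limit_law[OF g_meas] by simp
qed

lemma conv_in_distr_fwd: "conv_in_distr \<Omega> (\<lambda>t \<omega>. fwd t y \<omega>) limit_law"
  unfolding conv_in_distr_def
proof (intro allI impI, elim conjE)
  fix g :: "real^'n \<Rightarrow> real"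
  assume g_cont: "continuous_on UNIV g" and "bounded (range g)"
  then obtain B where B: "\<And>y. \<bar>g y\<bar> \<le> B"
    unfolding bounded_iff by auto
  show "(\<lambda>t. \<integral>\<omega>. g (fwd t y \<omega>) \<partial>\<Omega>) \<longlonglongrightarrow> (\<integral>y. g y \<partial>limit_law)"
    using LIMSEQ_markov_op_pow[OF g_cont B, of y]
      integral_fwd_markov_op[OF borel_measurable_continuous_onI[OF g_cont] B] by simp
qed

lemma AE_stl:
  assumes "AE \<omega> in \<Omega>. Q \<omega>"
  shows "AE \<omega> in \<Omega>. Q (stl \<omega>)"
proof -
  from assms obtain N where N_sub: "{\<omega> \<in> space \<Omega>. \<not> Q \<omega>} \<subseteq> N"
    and "emeasure \<Omega> N = 0" "N \<in> sets \<Omega>"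
    by (rule AE_E)
  then have N: "{\<omega> \<in> space \<Omega>. \<not> Q \<omega>} \<subseteq> N" "N \<in> null_sets \<Omega>"
    by auto
  have [measurable]: "N \<in> sets \<Omega>" "stl \<in> \<Omega> \<rightarrow>\<^sub>M \<Omega>"
    using N(2) measurable_stl_\<Omega> by auto
  have "AE \<omega> in \<Omega>. \<omega> \<notin> N"
    using N(2) by (rule AE_not_in)
  moreover have "Measurable.pred \<Omega> (\<lambda>\<omega>. stl \<omega> \<notin> N)"
    by measurable
  ultimately have "AE \<omega> in \<Omega>. stl \<omega> \<notin> N"
    unfolding \<Omega>_def
    by (subst prob_space.AE_stream_space[OF prob_space_measure_pmf]) (auto simp: \<Omega>_def)
  then show ?thesis
    using N(1) by (auto elim!: eventually_mono)
qed

lemma AE_bwd_lim_eq: "AE \<omega> in \<Omega>. bwd_lim \<omega> = F (shd \<omega>) (bwd_lim (stl \<omega>))"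
  using AE_LIMSEQ_bwd AE_stl[OF AE_LIMSEQ_bwd]
proof eventually_elim
  case (elim \<omega>)
  have "(\<lambda>t. bwd (Suc t) 0 \<omega>) \<longlonglongrightarrow> bwd_lim \<omega>"
    using elim(1) by (intro LIMSEQ_Suc) blast
  moreover have "isCont (F (shd \<omega>)) (bwd_lim (stl \<omega>))"
    using continuous_on_F by (simp add: continuous_on_eq_continuous_at)
  then have "(\<lambda>t. F (shd \<omega>) (bwd t 0 (stl \<omega>))) \<longlonglongrightarrow> F (shd \<omega>) (bwd_lim (stl \<omega>))"
    by (rule isCont_tendsto_compose[OF _ elim(2)[rule_format, of 0]])
  ultimately show ?case
    by (simp add: LIMSEQ_unique)
qed

lemma emeasure_pmf_F_preimage:
  "emeasure (measure_pmf P) {p. F p y \<in> S} = (\<Sum>p\<in>UNIV. ennreal (pmf P p) * indicator S (F p y))"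
proof -
  have "emeasure (measure_pmf P) {p. F p y \<in> S} = (\<integral>\<^sup>+p. indicator {p. F p y \<in> S} p \<partial>measure_pmf P)"
    by simp
  also have "\<dots> = (\<Sum>p\<in>UNIV. ennreal (pmf P p) * indicator S (F p y))"
    by (auto simp: nn_integral_measure_pmf nn_integral_count_space_finite
        intro!: sum.cong split: split_indicator)
  finally show ?thesis .
qed

lemma invariant_distr_limit_law: "invariant_distr P F limit_law"
  unfolding invariant_distr_def
proof (intro conjI prob_space_limit_law sets_limit_law ballI)
  fix S :: "(real^'n) set"
  assume S[measurable]: "S \<in> sets borel"
  note [measurable] = measurable_bwd_lim measurable_stl_\<Omega>
  let ?Q = "\<lambda>y. \<Sum>p\<in>UNIV. ennreal (pmf P p) * indicator S (F p y)"
  have Q_meas: "?Q \<in> borel_measurable borel"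
    by measurable
  have "(\<lambda>\<omega>. indicator S (F p (bwd_lim (stl \<omega>))) :: ennreal) \<in> borel_measurable \<Omega>" for p
    by measurable
  then have head_meas: "(\<lambda>\<omega>. indicator S (F (shd \<omega>) (bwd_lim (stl \<omega>))) :: ennreal) \<in> borel_measurable \<Omega>"
    by (rule measurable_by_shd)
  have "emeasure limit_law S = (\<integral>\<^sup>+y. indicator S y \<partial>limit_law)"
    by simp
  also have "\<dots> = (\<integral>\<^sup>+\<omega>. indicator S (bwd_lim \<omega>) \<partial>\<Omega>)"
    unfolding limit_law_def by (intro nn_integral_distr) auto
  also have "\<dots> = (\<integral>\<^sup>+\<omega>. indicator S (F (shd \<omega>) (bwd_lim (stl \<omega>))) \<partial>\<Omega>)"
    by (intro nn_integral_cong_AE) (use AE_bwd_lim_eq in \<open>auto elim!: eventually_mono\<close>)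
  also have "\<dots> = (\<integral>\<^sup>+p. (\<integral>\<^sup>+\<omega>. indicator S (F p (bwd_lim \<omega>)) \<partial>\<Omega>) \<partial>measure_pmf P)"
    using prob_space.nn_integral_stream_space[OF prob_space_measure_pmf,
        of "\<lambda>\<omega>. indicator S (F (shd \<omega>) (bwd_lim (stl \<omega>)))"] head_meas
    unfolding \<Omega>_def by simp
  also have "\<dots> = (\<Sum>p\<in>UNIV. ennreal (pmf P p) * (\<integral>\<^sup>+\<omega>. indicator S (F p (bwd_lim \<omega>)) \<partial>\<Omega>))"
    by (simp add: nn_integral_measure_pmf nn_integral_count_space_finite)
  also have "\<dots> = (\<integral>\<^sup>+\<omega>. ?Q (bwd_lim \<omega>) \<partial>\<Omega>)"
    by (subst nn_integral_sum) (auto simp: nn_integral_cmult)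
  also have "\<dots> = (\<integral>\<^sup>+y. ?Q y \<partial>limit_law)"
    unfolding limit_law_def by (rule nn_integral_distr[symmetric]) (use Q_meas in auto)
  finally show "emeasure limit_law S = (\<integral>\<^sup>+y. emeasure (measure_pmf P) {p. F p y \<in> S} \<partial>limit_law)"
    by (simp add: emeasure_pmf_F_preimage)
qed

lemma measurable_F_pair:
  assumes "sets M = sets borel"
  shows "(\<lambda>z. F (snd z) (fst z)) \<in> borel_measurable (M \<Otimes>\<^sub>M measure_pmf P)"
proof -
  have "snd \<in> measurable (M \<Otimes>\<^sub>M measure_pmf P) (count_space UNIV)"
    using measurable_snd[of M "measure_pmf P"] by (simp add: measurable_def)
  moreover have "(\<lambda>z. F p (fst z)) \<in> borel_measurable (M \<Otimes>\<^sub>M measure_pmf P)" for p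
    using measurable_compose[OF measurable_fst measurable_F[unfolded measurable_cong_sets[OF assms[symmetric] refl]]] .
  ultimately show ?thesis
    by (intro measurable_compose_countable'[where f="\<lambda>p z. F p (fst z)" and g=snd and I=UNIV]) auto
qed

lemma invariant_distr_eq_distr:
  assumes "invariant_distr P F \<nu>"
  shows "\<nu> = distr (\<nu> \<Otimes>\<^sub>M measure_pmf P) borel (\<lambda>z. F (snd z) (fst z))"
proof -
  have sets: "sets \<nu> = sets borel"
    and invariant: "\<And>S. S \<in> sets borel \<Longrightarrow>
                      emeasure \<nu> S = (\<integral>\<^sup>+y. emeasure (measure_pmf P) {p. F p y \<in> S} \<partial>\<nu>)"
    using assms unfolding invariant_distr_def by auto
  note T_meas = measurable_F_pair[OF sets]
  show ?thesis
  proof (rule measure_eqI)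
    fix S
    assume "S \<in> sets \<nu>"
    then have S[measurable]: "S \<in> sets borel"
      using sets by simp
    have "emeasure (distr (\<nu> \<Otimes>\<^sub>M measure_pmf P) borel (\<lambda>z. F (snd z) (fst z))) S
          = (\<integral>\<^sup>+y. indicator S y \<partial>distr (\<nu> \<Otimes>\<^sub>M measure_pmf P) borel (\<lambda>z. F (snd z) (fst z)))"
      by simp
    also have "\<dots> = (\<integral>\<^sup>+z. indicator S (F (snd z) (fst z)) \<partial>(\<nu> \<Otimes>\<^sub>M measure_pmf P))"
      by (intro nn_integral_distr T_meas) auto
    also have "\<dots> = (\<integral>\<^sup>+y. \<integral>\<^sup>+p. indicator S (F p y) \<partial>measure_pmf P \<partial>\<nu>)"
    proof -
      have "(\<lambda>z. indicator S (F (snd z) (fst z)) :: ennreal) \<in> borel_measurable (\<nu> \<Otimes>\<^sub>M measure_pmf P)"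
        using T_meas by measurable
      from sigma_finite_measure.nn_integral_fst[OF
          prob_space_imp_sigma_finite[OF prob_space_measure_pmf] this]
      show ?thesis
        by simp
    qed
    also have "\<dots> = emeasure \<nu> S"
      using invariant[OF S]
      by (simp add: emeasure_pmf_F_preimage nn_integral_measure_pmf nn_integral_count_space_finite)
    finally show "emeasure \<nu> S = emeasure (distr (\<nu> \<Otimes>\<^sub>M measure_pmf P) borel (\<lambda>z. F (snd z) (fst z))) S"
      by simp
  qed (simp add: sets)
qed

lemma integral_markov_op_invariant:
  fixes g :: "real^'n \<Rightarrow> real"
  assumes inv: "invariant_distr P F \<nu>"
    and g: "g \<in> borel_measurable borel" "\<And>y. \<bar>g y\<bar> \<le> B"
  shows "(\<integral>y. markov_op g y \<partial>\<nu>) = (\<integral>y. g y \<partial>\<nu>)"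
proof -
  have prob: "prob_space \<nu>" and sets: "sets \<nu> = sets borel"
    using inv unfolding invariant_distr_def by auto
  interpret pair_prob_space \<nu> "measure_pmf P"
    using prob by (simp add: pair_prob_space_def pair_sigma_finite_def prob_space_measure_pmf
        prob_space_imp_sigma_finite)
  let ?T = "\<lambda>z. F (snd z) (fst z)"
  note T_meas = measurable_F_pair[OF sets]
  have gT_meas: "(\<lambda>z. g (?T z)) \<in> borel_measurable (\<nu> \<Otimes>\<^sub>M measure_pmf P)"
    using measurable_compose[OF T_meas g(1)] .
  have "(\<integral>y. g y \<partial>\<nu>) = (\<integral>z. g (?T z) \<partial>(\<nu> \<Otimes>\<^sub>M measure_pmf P))"
    by (subst invariant_distr_eq_distr[OF inv]) (rule integral_distr[OF T_meas g(1)])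
  also have "\<dots> = (\<integral>y. \<integral>p. g (F p y) \<partial>measure_pmf P \<partial>\<nu>)"
  proof -
    have "integrable (\<nu> \<Otimes>\<^sub>M measure_pmf P) (\<lambda>z. g (?T z))"
      by (rule integrable_const_bound[where B=B]) (use gT_meas g(2) in auto)
    from integral_fst'[OF this] show ?thesis
      by simp
  qed
  also have "\<dots> = (\<integral>y. markov_op g y \<partial>\<nu>)"
    unfolding markov_op_def integral_measure_pmf_finite by simp
  finally show ?thesis ..
qed

lemma integral_markov_op_pow_invariant:
  fixes g :: "real^'n \<Rightarrow> real"
  assumes inv: "invariant_distr P F \<nu>"
  shows "g \<in> borel_measurable borel \<Longrightarrow> (\<And>y. \<bar>g y\<bar> \<le> B) \<Longrightarrow>
    (\<integral>y. (markov_op ^^ t) g y \<partial>\<nu>) = (\<integral>y. g y \<partial>\<nu>)"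
proof (induction t arbitrary: g)
  case (Suc t)
  have "(\<integral>y. (markov_op ^^ Suc t) g y \<partial>\<nu>) = (\<integral>y. (markov_op ^^ t) (markov_op g) y \<partial>\<nu>)"
    by (simp add: funpow_Suc_right del: funpow.simps)
  also have "\<dots> = (\<integral>y. g y \<partial>\<nu>)"
    using Suc.IH[OF measurable_markov_op[OF Suc.prems(1)] markov_op_bounded[OF Suc.prems(2)]]
      integral_markov_op_invariant[OF inv Suc.prems] by simp
  finally show ?case .
qed simp

text \<open>Integrating \<open>(markov_op ^^ t) g\<close> against an invariant law gives \<open>\<integral> g\<close> for every \<open>t\<close>,
  while the integrands converge pointwise to the constant \<open>\<integral> g d limit_law\<close>.\<close>

lemma invariant_distr_unique:
  assumes inv: "invariant_distr P F \<nu>"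
  shows "\<nu> = limit_law"
proof -
  have prob: "prob_space \<nu>" and sets: "sets \<nu> = sets borel"
    using inv unfolding invariant_distr_def by auto
  interpret prob_space \<nu> by (rule prob)
  show ?thesis
  proof (rule measure_eqI_continuous_integral[OF prob sets prob_space_limit_law sets_limit_law])
    fix g :: "real^'n \<Rightarrow> real"
    assume g_cont: "continuous_on UNIV g" and g_01: "\<And>x. 0 \<le> g x \<and> g x \<le> 1"
    have g_bounded: "\<bar>g y\<bar> \<le> 1" for y
      using g_01[of y] by simp
    have g_meas: "g \<in> borel_measurable borel"
      by (rule borel_measurable_continuous_onI[OF g_cont])
    have "(\<lambda>t. \<integral>y. (markov_op ^^ t) g y \<partial>\<nu>) \<longlonglongrightarrow> (\<integral>y. (\<integral>y. g y \<partial>limit_law) \<partial>\<nu>)"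
    proof (rule integral_dominated_convergence[where w="\<lambda>_. 1"])
      show "(markov_op ^^ t) g \<in> borel_measurable \<nu>" for t
        using measurable_markov_op_pow[OF g_meas] by (simp add: measurable_cong_sets[OF sets refl])
      show "AE y in \<nu>. (\<lambda>t. (markov_op ^^ t) g y) \<longlonglongrightarrow> (\<integral>y. g y \<partial>limit_law)"
        using LIMSEQ_markov_op_pow[OF g_cont g_bounded] by simp
      show "AE y in \<nu>. norm ((markov_op ^^ t) g y) \<le> 1" for t
        using markov_op_pow_bounded[OF g_bounded] by simp
    qed simp_all
    then show "(\<integral>y. g y \<partial>\<nu>) = (\<integral>y. g y \<partial>limit_law)"
      using integral_markov_op_pow_invariant[OF inv g_meas g_bounded]
      by (simp add: prob_space LIMSEQ_const_iff)
  qed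
qed

lemma Abar_mult: "Abar *v v = (\<Sum>p\<in>UNIV. pmf P p *\<^sub>R (A p *v v))"
  unfolding Abar_def by (rule sum_scaleR_matrix_vector_mult)

lemma mean_F: "(\<Sum>p\<in>UNIV. pmf P p *\<^sub>R F p y) = Abar *v y + cbar"
  by (simp add: F_def Abar_mult cbar_def scaleR_add_right sum.distrib)

lemma in_cube_Abar_mult:
  assumes "in_cube r v"
  shows "in_cube (\<rho> * r) (Abar *v v)"
  unfolding in_cube_def
proof
  fix k
  have r_nonneg: "0 \<le> r"
    using assms by (auto simp: in_cube_def intro: order_trans[OF abs_ge_zero])
  have "\<bar>(Abar *v v) $ k\<bar> \<le> (\<Sum>p\<in>UNIV. \<bar>pmf P p * (A p *v v) $ k\<bar>)"
    by (simp add: Abar_mult sum_abs)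
  also have "\<dots> \<le> (\<Sum>p\<in>UNIV. pmf P p * ((\<Sum>l\<in>UNIV. A p $ k $ l) * r))"
    by (intro sum_mono) (auto simp: abs_mult intro!: mult_left_mono A_mult_in_cube_le[OF assms])
  also have "\<dots> = (\<Sum>p\<in>UNIV. pmf P p * (\<Sum>l\<in>UNIV. A p $ k $ l)) * r"
    by (simp add: sum_distrib_right mult.assoc)
  also have "\<dots> \<le> \<rho> * r"
    using mean_A_rowsum_le[of k] r_nonneg by (rule mult_right_mono)
  finally show "\<bar>(Abar *v v) $ k\<bar> \<le> \<rho> * r" .
qed

lemma linear_Abar_pow: "linear (((*v) Abar) ^^ t)"
  by (induction t) (auto simp: linear_id[unfolded id_def] intro: linear_compose[unfolded o_def])

lemma in_cube_Abar_pow: "in_cube r v \<Longrightarrow> in_cube (\<rho> ^ t * r) ((((*v) Abar) ^^ t) v)"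
  by (induction t arbitrary: r) (auto dest: in_cube_Abar_mult simp: mult.assoc)

lemma LIMSEQ_Abar_pow: "(\<lambda>t. (((*v) Abar) ^^ t) v) \<longlonglongrightarrow> 0"
proof (rule vec_tendstoI)
  fix k
  have "(\<lambda>t. \<rho> ^ t * norm v) \<longlonglongrightarrow> 0 * norm v"
    by (intro tendsto_mult tendsto_const LIMSEQ_power_zero) (use rho_nonneg rho_less_1 in auto)
  moreover have "\<bar>(((*v) Abar) ^^ t) v $ k\<bar> \<le> \<rho> ^ t * norm v" for t
    using in_cube_Abar_pow[OF in_cube_norm[of v], of t] by (simp add: in_cube_def)
  ultimately show "(\<lambda>t. (((*v) Abar) ^^ t) v $ k) \<longlonglongrightarrow> 0 $ k"
    by (auto intro: Lim_null_comparison[where g="\<lambda>t. \<rho> ^ t * norm v"])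
qed

lemma invertible_I_minus_Abar: "invertible (mat 1 - Abar)"
proof -
  have "v = 0" if "(mat 1 - Abar) *v v = 0" for v
  proof -
    have "Abar *v v = v"
      using that by (simp add: matrix_vector_mult_diff_rdistrib)
    then have "(((*v) Abar) ^^ t) v = v" for t
      by (induction t) simp_all
    then show "v = 0"
      using LIMSEQ_Abar_pow[of v] by (simp add: LIMSEQ_const_iff)
  qed
  then show ?thesis
    using matrix_left_invertible_ker invertible_left_inverse by blast
qed

definition mean_limit :: "real^'n" where
  "mean_limit = matrix_inv (mat 1 - Abar) *v cbar"

lemma mean_limit_fixed: "Abar *v mean_limit + cbar = mean_limit"
proof -
  have "(mat 1 - Abar) *v mean_limit = cbar"
    unfolding mean_limit_def
    by (simp add: matrix_vector_mul_assoc matrix_inv_inverse(1)[OF invertible_I_minus_Abar])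
  then show ?thesis
    by (simp add: matrix_vector_mult_diff_rdistrib algebra_simps)
qed

lemma integrable_fwd: "integrable \<Omega> (\<lambda>\<omega>. fwd t y \<omega>)"
proof -
  obtain r where "r0 \<le> r" "in_cube r y"
    by (rule in_cube_start)
  then show ?thesis
    by (intro integrable_\<Omega>_bounded[OF measurable_fwd, where B="real CARD('n) * r"])
       (simp add: norm_le_in_cube in_cube_fwd)
qed

text \<open>The mean obeys the linear recursion \<open>m \<mapsto> Abar m + cbar\<close>, whose fixed point is \<open>mean_limit\<close>.\<close>

lemma integral_fwd: "(\<integral>\<omega>. fwd t y \<omega> \<partial>\<Omega>) = mean_limit + (((*v) Abar) ^^ t) (y - mean_limit)"
proof (induction t arbitrary: y)
  case 0
  show ?case by simp
next
  case (Suc t)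
  let ?L = "((*v) Abar) ^^ t"
  have "(\<integral>\<omega>. fwd (Suc t) y \<omega> \<partial>\<Omega>) = (\<Sum>p\<in>UNIV. pmf P p *\<^sub>R (\<integral>\<omega>. fwd (Suc t) y (p ## \<omega>) \<partial>\<Omega>))"
    by (rule integral_\<Omega>_first_step[OF measurable_fwd integrable_fwd])
  also have "\<dots> = (\<Sum>p\<in>UNIV. pmf P p *\<^sub>R (mean_limit + ?L (F p y - mean_limit)))"
    using Suc by simp
  also have "\<dots> = mean_limit + ?L (\<Sum>p\<in>UNIV. pmf P p *\<^sub>R (F p y - mean_limit))"
    using linear_Abar_pow[of t]
    by (simp add: scaleR_add_right sum.distrib linear_sum linear_scale
        scaleR_sum_left[symmetric] sum_pmf_UNIV)
  also have "(\<Sum>p\<in>UNIV. pmf P p *\<^sub>R (F p y - mean_limit)) = Abar *v (y - mean_limit)"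
    using mean_limit_fixed
    by (simp add: scaleR_diff_right sum_subtractf mean_F scaleR_sum_left[symmetric] sum_pmf_UNIV
        matrix_vector_mult_diff_distrib algebra_simps)
  finally show ?case
    by (simp add: funpow_Suc_right del: funpow.simps)
qed

lemma LIMSEQ_integral_fwd: "(\<lambda>t. \<integral>\<omega>. fwd t y \<omega> \<partial>\<Omega>) \<longlonglongrightarrow> mean_limit"
  unfolding integral_fwd using tendsto_add[OF tendsto_const LIMSEQ_Abar_pow] by simp

text \<open>The innovations \<open>innov (\<omega> !! i) (fwd i y \<omega>)\<close> have mean zero given the past, so their sums
  \<open>mart\<close> form a martingale with increments bounded on the invariant cube.\<close>

definition innov :: "'p \<Rightarrow> real^'n \<Rightarrow> real^'n" where
  "innov p z = F p z - (Abar *v z + cbar)"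

definition mart :: "nat \<Rightarrow> real^'n \<Rightarrow> 'p stream \<Rightarrow> real^'n" where
  "mart t y \<omega> = (\<Sum>i<t. innov (\<omega> !! i) (fwd i y \<omega>))"

lemma fwd_Suc_snth: "fwd (Suc i) y \<omega> = F (\<omega> !! i) (fwd i y \<omega>)"
  by (induction i arbitrary: y \<omega>) auto

lemma sum_fwd_eq:
  "(mat 1 - Abar) *v (\<Sum>i<t. fwd i y \<omega>) = real t *\<^sub>R cbar + y - fwd t y \<omega> + mart t y \<omega>"
proof (induction t)
  case 0
  show ?case by (simp add: mart_def)
next
  case (Suc t)
  have "(mat 1 - Abar) *v (\<Sum>i<Suc t. fwd i y \<omega>)
        = (mat 1 - Abar) *v (\<Sum>i<t. fwd i y \<omega>) + (fwd t y \<omega> - Abar *v fwd t y \<omega>)"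
    by (simp add: matrix_vector_right_distrib matrix_vector_mult_diff_rdistrib)
  also have "\<dots> = real (Suc t) *\<^sub>R cbar + y - fwd (Suc t) y \<omega> + mart (Suc t) y \<omega>"
    unfolding Suc.IH by (simp add: mart_def fwd_Suc_snth innov_def algebra_simps del: fwd.simps)
  finally show ?case .
qed

lemma mart_Suc: "mart (Suc t) y \<omega> = innov (shd \<omega>) y + mart t (F (shd \<omega>) y) (stl \<omega>)"
  unfolding mart_def by (subst sum.lessThan_Suc_shift) simp

lemma measurable_mart: "(\<lambda>\<omega>. mart t y \<omega>) \<in> borel_measurable \<Omega>"
proof -
  have "continuous_on UNIV (innov p)" for p
    unfolding innov_def[abs_def]
    by (intro continuous_intros continuous_on_F matrix_vector_mult_linear_continuous_on)
  then have "(\<lambda>\<omega>. innov p (fwd i y \<omega>)) \<in> borel_measurable \<Omega>" for p i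
    by (intro measurable_compose[OF measurable_fwd] borel_measurable_continuous_onI)
  then have "(\<lambda>\<omega>. innov (\<omega> !! i) (fwd i y \<omega>)) \<in> borel_measurable \<Omega>" for i
    by (rule measurable_by_snth)
  then show ?thesis
    unfolding mart_def by (rule borel_measurable_sum)
qed

lemma innov_bound:
  assumes "r0 \<le> r" "in_cube r z"
  shows "\<bar>innov p z $ k\<bar> \<le> 2 * r"
proof -
  have "\<bar>(Abar *v z + cbar) $ k\<bar> \<le> (\<Sum>p\<in>UNIV. \<bar>pmf P p * F p z $ k\<bar>)"
    by (simp add: mean_F[symmetric] sum_abs)
  also have "\<dots> \<le> (\<Sum>p\<in>UNIV. pmf P p * r)"
    using in_cube_F[OF assms]
    by (intro sum_mono) (auto simp: abs_mult in_cube_def intro!: mult_left_mono)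
  also have "\<dots> = r"
    by (simp add: sum_distrib_right[symmetric] sum_pmf_UNIV)
  finally have "\<bar>(Abar *v z + cbar) $ k\<bar> \<le> r" .
  moreover have "\<bar>F p z $ k\<bar> \<le> r"
    using in_cube_F[OF assms, of p] by (simp add: in_cube_def)
  moreover have "\<bar>innov p z $ k\<bar> \<le> \<bar>F p z $ k\<bar> + \<bar>(Abar *v z + cbar) $ k\<bar>"
    by (simp add: innov_def abs_triangle_ineq4)
  ultimately show ?thesis
    by linarith
qed

lemma mart_bound: "r0 \<le> r \<Longrightarrow> in_cube r y \<Longrightarrow> \<bar>mart t y \<omega> $ k\<bar> \<le> real t * (2 * r)"
proof -
  assume r: "r0 \<le> r" "in_cube r y"
  have "\<bar>mart t y \<omega> $ k\<bar> \<le> (\<Sum>i<t. \<bar>innov (\<omega> !! i) (fwd i y \<omega>) $ k\<bar>)"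
    unfolding mart_def by (simp add: sum_abs)
  also have "\<dots> \<le> (\<Sum>i<t. 2 * r)"
    by (intro sum_mono innov_bound in_cube_fwd r)
  finally show ?thesis
    by simp
qed

lemma integrable_mart:
  assumes "r0 \<le> r" "in_cube r y"
  shows "integrable \<Omega> (\<lambda>\<omega>. mart t y \<omega> $ k)" "integrable \<Omega> (\<lambda>\<omega>. (mart t y \<omega> $ k)\<^sup>2)"
proof -
  show "integrable \<Omega> (\<lambda>\<omega>. mart t y \<omega> $ k)"
    by (rule integrable_\<Omega>_bounded[where B="real t * (2 * r)"])
       (use measurable_mart mart_bound[OF assms] in auto)
  have "\<bar>mart t y \<omega> $ k\<bar>\<^sup>2 \<le> (real t * (2 * r))\<^sup>2" for \<omega>
    by (rule power_mono[OF mart_bound[OF assms]]) simp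
  then show "integrable \<Omega> (\<lambda>\<omega>. (mart t y \<omega> $ k)\<^sup>2)"
    by (intro integrable_\<Omega>_bounded[where B="(real t * (2 * r))\<^sup>2"])
       (use measurable_mart in auto)
qed

lemma sum_pmf_innov: "(\<Sum>p\<in>UNIV. pmf P p * innov p z $ k) = 0"
proof -
  have "(\<Sum>p\<in>UNIV. pmf P p *\<^sub>R innov p z) = 0"
    by (simp add: innov_def scaleR_diff_right sum_subtractf mean_F
        scaleR_sum_left[symmetric] sum_pmf_UNIV)
  then show ?thesis
    by (simp add: vec_eq_iff)
qed

lemma integral_mart: "r0 \<le> r \<Longrightarrow> in_cube r y \<Longrightarrow> (\<integral>\<omega>. mart t y \<omega> $ k \<partial>\<Omega>) = 0"
proof (induction t arbitrary: y)
  case 0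
  show ?case by (simp add: mart_def)
next
  case (Suc t)
  interpret prob_space \<Omega> by (rule prob_space_\<Omega>)
  note r = Suc.prems and r' = Suc.prems(1) in_cube_F[OF Suc.prems]
  have "(\<lambda>\<omega>. mart (Suc t) y \<omega> $ k) \<in> borel_measurable \<Omega>"
    using measurable_mart by measurable
  then have "(\<integral>\<omega>. mart (Suc t) y \<omega> $ k \<partial>\<Omega>)
        = (\<Sum>p\<in>UNIV. pmf P p *\<^sub>R (\<integral>\<omega>. mart (Suc t) y (p ## \<omega>) $ k \<partial>\<Omega>))"
    by (rule integral_\<Omega>_first_step[OF _ integrable_mart(1)[OF r]])
  also have "\<dots> = (\<Sum>p\<in>UNIV. pmf P p * (innov p y $ k + (\<integral>\<omega>. mart t (F p y) \<omega> $ k \<partial>\<Omega>)))"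
    using integrable_mart(1)[OF r'] by (simp add: mart_Suc)
  also have "\<dots> = 0"
    using Suc.IH[OF r'] sum_pmf_innov by simp
  finally show ?case .
qed

lemma integral_mart_sq_le:
  "r0 \<le> r \<Longrightarrow> in_cube r y \<Longrightarrow> (\<integral>\<omega>. (mart t y \<omega> $ k)\<^sup>2 \<partial>\<Omega>) \<le> real t * (2 * r)\<^sup>2"
proof (induction t arbitrary: y)
  case 0
  show ?case by (simp add: mart_def)
next
  case (Suc t)
  interpret prob_space \<Omega> by (rule prob_space_\<Omega>)
  note r = Suc.prems and r' = Suc.prems(1) in_cube_F[OF Suc.prems]
  let ?d = "\<lambda>p. innov p y $ k" and ?M = "\<lambda>p \<omega>. mart t (F p y) \<omega> $ k"
  have "(\<lambda>\<omega>. (mart (Suc t) y \<omega> $ k)\<^sup>2) \<in> borel_measurable \<Omega>"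
    using measurable_mart by measurable
  then have "(\<integral>\<omega>. (mart (Suc t) y \<omega> $ k)\<^sup>2 \<partial>\<Omega>)
        = (\<Sum>p\<in>UNIV. pmf P p *\<^sub>R (\<integral>\<omega>. (mart (Suc t) y (p ## \<omega>) $ k)\<^sup>2 \<partial>\<Omega>))"
    by (rule integral_\<Omega>_first_step[OF _ integrable_mart(2)[OF r]])
  also have "\<dots> = (\<Sum>p\<in>UNIV. pmf P p * ((?d p)\<^sup>2 + (\<integral>\<omega>. (?M p \<omega>)\<^sup>2 \<partial>\<Omega>)
                                       + 2 * ?d p * (\<integral>\<omega>. ?M p \<omega> \<partial>\<Omega>)))"
    using integrable_mart[OF r'] by (simp add: mart_Suc power2_sum)
  also have "\<dots> \<le> (\<Sum>p\<in>UNIV. pmf P p * ((2 * r)\<^sup>2 + real t * (2 * r)\<^sup>2 + 0))"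
  proof (intro sum_mono mult_left_mono add_mono)
    fix p
    show "(?d p)\<^sup>2 \<le> (2 * r)\<^sup>2"
      using power_mono[OF innov_bound[OF r, of p k] abs_ge_zero, of 2] by simp
    show "(\<integral>\<omega>. (?M p \<omega>)\<^sup>2 \<partial>\<Omega>) \<le> real t * (2 * r)\<^sup>2"
      by (rule Suc.IH[OF r'])
    show "2 * ?d p * (\<integral>\<omega>. ?M p \<omega> \<partial>\<Omega>) \<le> 0"
      using integral_mart[OF r'] by simp
  qed auto
  also have "\<dots> = real (Suc t) * (2 * r)\<^sup>2"
    by (simp only: sum_distrib_right[symmetric] sum_pmf_UNIV) (simp add: algebra_simps)
  finally show ?case .
qed

text \<open>The second moments of \<open>mart (q\<^sup>2) / q\<^sup>2\<close> are \<open>O(1/q\<^sup>2)\<close>, hence summable, which gives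
  almost sure convergence along squares; \<open>LIMSEQ_div_of_squares\<close> fills the gaps.\<close>

lemma AE_LIMSEQ_mart_div:
  assumes r: "r0 \<le> r" "in_cube r y"
  shows "AE \<omega> in \<Omega>. (\<lambda>t. mart t y \<omega> $ k / real t) \<longlonglongrightarrow> 0"
proof -
  interpret prob_space \<Omega> by (rule prob_space_\<Omega>)
  define Z where "Z q \<omega> = (mart ((Suc q)\<^sup>2) y \<omega> $ k / real ((Suc q)\<^sup>2))\<^sup>2" for q \<omega>
  have "AE \<omega> in \<Omega>. summable (\<lambda>q. Z q \<omega>)"
  proof (rule AE_summable_of_summable_expectation)
    show "Z q \<in> borel_measurable \<Omega>" for q
      unfolding Z_def[abs_def] using measurable_mart by measurable
    show "integrable \<Omega> (Z q)" for q
      unfolding Z_def[abs_def] power_divide by (intro integrable_divide integrable_mart(2)[OF r])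
    have cancel: "x * C / x\<^sup>2 = C / x" if "x \<noteq> 0" for x C :: real
      using that by (simp add: power2_eq_square)
    have bound: "expectation (Z q) \<le> (2 * r)\<^sup>2 / real ((Suc q)\<^sup>2)" for q
    proof -
      have "expectation (Z q) \<le> real ((Suc q)\<^sup>2) * (2 * r)\<^sup>2 / (real ((Suc q)\<^sup>2))\<^sup>2"
        unfolding Z_def power_divide integral_divide_zero
        by (intro divide_right_mono integral_mart_sq_le[OF r]) simp
      then show ?thesis
        using cancel[of "real ((Suc q)\<^sup>2)" "(2 * r)\<^sup>2"] by simp
    qed
    have nonneg: "0 \<le> expectation (Z q)" for q
      by (rule integral_nonneg_AE) (simp add: Z_def)
    have summable: "summable (\<lambda>q. (2 * r)\<^sup>2 / real ((Suc q)\<^sup>2))"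
    proof -
      have "summable (\<lambda>q. inverse (real q ^ 2))"
        by (rule inverse_power_summable) simp
      then have "summable (\<lambda>q. inverse (real (Suc q) ^ 2))"
        by (subst summable_Suc_iff)
      from summable_mult[OF this, of "(2 * r)\<^sup>2"] show ?thesis
        by (simp add: divide_inverse)
    qed
    show "summable (\<lambda>q. expectation (Z q))"
      by (rule summable_comparison_test'[OF summable]) (use bound nonneg in auto)
  qed (simp add: Z_def)
  then show ?thesis
  proof eventually_elim
    case (elim \<omega>)
    have "(\<lambda>q. sqrt (Z q \<omega>)) \<longlonglongrightarrow> sqrt 0"
      by (intro tendsto_real_sqrt summable_LIMSEQ_zero elim)
    then have "(\<lambda>q. mart ((Suc q)\<^sup>2) y \<omega> $ k / real ((Suc q)\<^sup>2)) \<longlonglongrightarrow> 0"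
      unfolding Z_def real_sqrt_abs real_sqrt_zero by (rule tendsto_rabs_zero_cancel)
    then have "(\<lambda>q. mart (q\<^sup>2) y \<omega> $ k / real (q\<^sup>2)) \<longlonglongrightarrow> 0"
      by (rule LIMSEQ_imp_Suc)
    then show ?case
      using innov_bound[OF r(1) in_cube_fwd[OF r]]
      by (intro LIMSEQ_div_of_squares[where B="2 * r"]) (simp add: mart_def)
  qed
qed

lemma average_fwd_eq:
  assumes "t \<ge> 1"
  shows "(1 / real t) *\<^sub>R (\<Sum>i<t. fwd i y \<omega>)
         = matrix_inv (mat 1 - Abar) *v (cbar + (1 / real t) *\<^sub>R (y - fwd t y \<omega> + mart t y \<omega>))"
proof -
  let ?Minv = "matrix_inv (mat 1 - Abar)" and ?w = "y - fwd t y \<omega> + mart t y \<omega>"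
  have "(mat 1 - Abar) *v (\<Sum>i<t. fwd i y \<omega>) = real t *\<^sub>R cbar + ?w"
    unfolding sum_fwd_eq by (simp add: algebra_simps)
  then have "?Minv *v ((mat 1 - Abar) *v (\<Sum>i<t. fwd i y \<omega>)) = ?Minv *v (real t *\<^sub>R cbar + ?w)"
    by simp
  then have "(\<Sum>i<t. fwd i y \<omega>) = ?Minv *v (real t *\<^sub>R cbar + ?w)"
    by (simp add: matrix_vector_mul_assoc matrix_inv_inverse(2)[OF invertible_I_minus_Abar])
  then show ?thesis
    using assms by (simp add: matrix_vector_mult_scaleR[symmetric] scaleR_add_right)
qed

lemma AE_LIMSEQ_average_fwd:
  "AE \<omega> in \<Omega>. (\<lambda>t. (1 / real t) *\<^sub>R (\<Sum>i<t. fwd i y \<omega>)) \<longlonglongrightarrow> mean_limit"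
proof -
  obtain r where r: "r0 \<le> r" "in_cube r y"
    by (rule in_cube_start)
  have "AE \<omega> in \<Omega>. \<forall>k. (\<lambda>t. mart t y \<omega> $ k / real t) \<longlonglongrightarrow> 0"
    using AE_LIMSEQ_mart_div[OF r] by (simp add: AE_all_countable)
  then show ?thesis
  proof eventually_elim
    case (elim \<omega>)
    have "(\<lambda>t. (y - fwd t y \<omega>) $ k / real t) \<longlonglongrightarrow> 0" for k
    proof (rule Lim_null_comparison)
      have "\<bar>(y - fwd t y \<omega>) $ k\<bar> \<le> 2 * r" for t
      proof -
        have "\<bar>y $ k\<bar> \<le> r" "\<bar>fwd t y \<omega> $ k\<bar> \<le> r"
          using r(2) in_cube_fwd[OF r, of t \<omega>] by (simp_all add: in_cube_def)
        then show ?thesis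
          using abs_triangle_ineq4[of "y $ k" "fwd t y \<omega> $ k"] by simp
      qed
      then have "norm ((y - fwd t y \<omega>) $ k / real t) \<le> 2 * r / real t" for t
        using divide_right_mono[of _ "2 * r" "real t"] by (simp add: abs_divide)
      then show "eventually (\<lambda>t. norm ((y - fwd t y \<omega>) $ k / real t) \<le> 2 * r / real t) sequentially"
        by (simp add: always_eventually)
      show "(\<lambda>t. 2 * r / real t) \<longlonglongrightarrow> 0"
        by (rule lim_const_over_n)
    qed
    then have "(\<lambda>t. (1 / real t) *\<^sub>R (y - fwd t y \<omega> + mart t y \<omega>)) \<longlonglongrightarrow> 0"
      using elim by (intro vec_tendstoI) (auto simp: add_divide_distrib intro: tendsto_add_zero)
    then have "(\<lambda>t. matrix_inv (mat 1 - Abar) *v (cbar + (1 / real t) *\<^sub>R (y - fwd t y \<omega> + mart t y \<omega>)))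
               \<longlonglongrightarrow> mean_limit"
      unfolding mean_limit_def
      by (intro isCont_tendsto_compose[OF matrix_vector_mult_linear_continuous_at]
          tendsto_add[where b=0, simplified] tendsto_const)
    then show ?case
      by (rule Lim_transform_eventually)
         (auto simp: average_fwd_eq eventually_sequentially intro!: exI[of _ 1])
  qed
qed

end

section \<open>Gossip with stubborn agents\<close>

lemma sum_UNIV_Plus:
  "(\<Sum>b\<in>(UNIV::('a::finite + 'b::finite) set). f b) = (\<Sum>l\<in>UNIV. f (Inl l)) + (\<Sum>s\<in>UNIV. f (Inr s))"
  using sum.Plus[of "UNIV::'a set" "UNIV::'b set" f] by (simp add: o_def)

lemma ev_nth: "ev i $ a = (if a = i then 1 else 0)"
  by (simp add: ev_def axis_def)

lemma Rmat_nth: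
  "Rmat i j $ a $ b =
    (if is_reg i \<and> is_reg j then (if a = b then 1 else 0) - 1/2 * ((ev i $ a - ev j $ a) * (ev i $ b - ev j $ b))
     else if is_reg i \<and> \<not> is_reg j then (if a = b then 1 else 0) - 1/2 * (ev i $ a * (ev i $ b - ev j $ b))
     else if \<not> is_reg i \<and> is_reg j then (if a = b then 1 else 0) - 1/2 * (ev j $ a * (ev j $ b - ev i $ b))
     else (if a = b then 1 else 0))"
  by (simp add: Rmat_def outer_def mat_def)

lemma Rmat_nonneg: "0 \<le> Rmat i j $ a $ b"
  unfolding Rmat_nth ev_nth by auto

lemma Rmat_rowsum: "(\<Sum>b\<in>UNIV. Rmat i j $ a $ b) = 1"
proof -
  have "(\<Sum>b\<in>UNIV. x * (ev i' $ b - ev j' $ b)) = 0" for x :: real and i' j' :: "'a + 'b"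
    by (simp add: sum_distrib_left[symmetric] sum_subtractf ev_nth)
  then have "(\<Sum>b\<in>UNIV. x * (ev i' $ b - ev j' $ b) / 2) = 0" for x :: real and i' j' :: "'a + 'b"
    by (simp add: sum_divide_distrib[symmetric])
  then show ?thesis
    by (cases "is_reg i"; cases "is_reg j") (simp_all add: Rmat_nth sum_subtractf)
qed

lemma Rmat_stubborn_row: "Rmat i j $ Inr s $ b = (if b = Inr s then 1 else 0)"
  by (cases i; cases j) (auto simp: Rmat_nth ev_nth)

lemma Rmat_regular_stubborn: "Rmat (Inl k) (Inr s) $ Inl k $ Inr s = 1/2"
  by (simp add: Rmat_nth ev_nth)

lemma reg_part_mult: "reg_part (R *v z) = Amat R *v reg_part z + Bmat R *v stub_part z"
  by (simp add: vec_eq_iff reg_part_def stub_part_def Amat_def Bmat_def matrix_vector_mult_def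
      sum_UNIV_Plus)

lemma stub_part_Rmat_mult: "stub_part (Rmat i j *v z) = stub_part z"
proof -
  have "(\<Sum>b\<in>UNIV. Rmat i j $ Inr s $ b * z $ b) = z $ Inr s" for s
  proof -
    have "(\<Sum>b\<in>UNIV. Rmat i j $ Inr s $ b * z $ b) = (\<Sum>b\<in>UNIV. if b = Inr s then z $ b else 0)"
      by (intro sum.cong) (auto simp: Rmat_stubborn_row)
    then show ?thesis
      by simp
  qed
  then show ?thesis
    by (simp add: vec_eq_iff stub_part_def matrix_vector_mult_def)
qed

lemma Amat_Bmat_rowsum:
  "(\<Sum>l\<in>UNIV. Amat (Rmat i j) $ k $ l) + (\<Sum>s\<in>UNIV. Bmat (Rmat i j) $ k $ s) = 1"
  using Rmat_rowsum[of i j "Inl k"] by (simp add: Amat_def Bmat_def sum_UNIV_Plus)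

text \<open>Only the lower bound \<open>w\<close> on the probability of each ordered pair matters: a regular
  agent \<open>k\<close> meets a stubborn agent with probability at least \<open>w\<close> and then keeps only half of
  its own row mass, so the mean row sums of the regular block are at most \<open>1 - w / 2\<close>.\<close>

locale stubborn_gossip =
  fixes P :: "(('r::finite + 's::finite) \<times> ('r + 's)) pmf" and x0 :: "real^('r + 's)" and w :: real
  assumes w_pos: "0 < w" and pmf_ge: "\<And>p. w \<le> pmf P p"
begin

abbreviation A :: "('r + 's) \<times> ('r + 's) \<Rightarrow> real^'r^'r" where
  "A p \<equiv> Amat (Rmat (fst p) (snd p))"

abbreviation B :: "('r + 's) \<times> ('r + 's) \<Rightarrow> real^'s^'r" where
  "B p \<equiv> Bmat (Rmat (fst p) (snd p))"

lemma B_nonneg: "0 \<le> B p $ k $ s"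
  by (simp add: Bmat_def Rmat_nonneg)

lemma A_rowsum_eq: "(\<Sum>l\<in>UNIV. A p $ k $ l) = 1 - (\<Sum>s\<in>UNIV. B p $ k $ s)"
  using Amat_Bmat_rowsum[of "fst p" "snd p" k] by simp

lemma mean_A_rowsum_le: "(\<Sum>p\<in>UNIV. pmf P p * (\<Sum>l\<in>UNIV. A p $ k $ l)) \<le> 1 - w / 2"
proof -
  fix s0 :: 's
  define p0 where "p0 = (Inl k :: 'r + 's, Inr s0 :: 'r + 's)"
  let ?b = "\<lambda>p. \<Sum>s\<in>UNIV. B p $ k $ s"
  have "B p0 $ k $ s0 = 1/2"
    by (simp add: p0_def Bmat_def Rmat_regular_stubborn)
  moreover have "B p0 $ k $ s0 \<le> ?b p0"
    by (rule member_le_sum) (simp_all add: B_nonneg)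
  ultimately have "1/2 \<le> ?b p0"
    by simp
  then have "w * (1/2) \<le> pmf P p0 * ?b p0"
    using pmf_ge[of p0] w_pos by (intro mult_mono) auto
  also have "\<dots> \<le> (\<Sum>p\<in>UNIV. pmf P p * ?b p)"
    by (rule member_le_sum) (auto intro!: mult_nonneg_nonneg sum_nonneg simp: Bmat_def Rmat_nonneg)
  finally have "w / 2 \<le> (\<Sum>p\<in>UNIV. pmf P p * ?b p)"
    by simp
  moreover have "(\<Sum>p\<in>UNIV. pmf P p * (\<Sum>l\<in>UNIV. A p $ k $ l)) = 1 - (\<Sum>p\<in>UNIV. pmf P p * ?b p)"
    using sum_pmf_eq_1[of UNIV P]
    by (simp add: A_rowsum_eq right_diff_distrib sum_subtractf)
  ultimately show ?thesis
    by linarith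
qed

lemma Bmult_bound: "\<bar>(B p *v stub_part x0) $ k\<bar> \<le> (1 - (\<Sum>l\<in>UNIV. A p $ k $ l)) * norm (stub_part x0)"
proof -
  have "\<bar>(B p *v stub_part x0) $ k\<bar> \<le> (\<Sum>s\<in>UNIV. \<bar>B p $ k $ s * stub_part x0 $ s\<bar>)"
    unfolding matrix_vector_mult_def by (simp add: sum_abs)
  also have "\<dots> \<le> (\<Sum>s\<in>UNIV. B p $ k $ s * norm (stub_part x0))"
    by (intro sum_mono)
       (auto simp: abs_mult B_nonneg component_le_norm_cart intro!: mult_left_mono)
  also have "\<dots> = (1 - (\<Sum>l\<in>UNIV. A p $ k $ l)) * norm (stub_part x0)"
    by (simp add: A_rowsum_eq sum_distrib_right)
  finally show ?thesis .
qed

end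

sublocale stubborn_gossip \<subseteq> iid_affine_recursion P A "\<lambda>p. B p *v stub_part x0" "norm (stub_part x0)" "1 - w / 2"
proof
  show "0 \<le> A p $ k $ l" for p k l
    by (simp add: Amat_def Rmat_nonneg)
  show "(\<Sum>l\<in>UNIV. A p $ k $ l) \<le> 1" for p k
    using A_rowsum_eq[of p k] sum_nonneg[of UNIV "\<lambda>s. B p $ k $ s"] B_nonneg by simp
qed (use w_pos Bmult_bound mean_A_rowsum_le in auto)

context stubborn_gossip
begin

lemma reg_part_xproc: "reg_part (xproc x0 \<omega> t) = fwd t (reg_part x0) \<omega>"
proof -
  have "stub_part (xproc x0 \<omega> t) = stub_part x0 \<and> reg_part (xproc x0 \<omega> t) = fwd t (reg_part x0) \<omega>"
  proof (induction t)
    case 0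
    show ?case by simp
  next
    case (Suc t)
    then show ?case
      by (simp add: reg_part_mult stub_part_Rmat_mult fwd_Suc_snth F_def del: fwd.simps)
  qed
  then show ?thesis ..
qed

end

theorem theorem2:
  fixes c1 :: "('r::finite + 's::finite) set"
    and ws wd :: real
    and P :: "(('r + 's) \<times> ('r + 's)) pmf"
    and x0 :: "real^('r + 's)"
  assumes nr1_pos: "\<exists>k. Inl k \<in> c1"
    and nr2_pos: "\<exists>k. Inl k \<notin> c1"
    and ws_pos: "ws > 0" and wd_pos: "wd > 0" and ws_ne_wd: "ws \<noteq> wd"
    and wsum: "ws * (real (card c1) ^ 2 + real (card (UNIV - c1)) ^ 2)
               + 2 * wd * real (card c1) * real (card (UNIV - c1)) = 1"
    and P_def: "\<And>i j. pmf P (i, j) = wgt c1 ws wd i j"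
  defines "\<Omega> \<equiv> stream_space (measure_pmf P)"
    and "xr \<equiv> (\<lambda>t \<omega>. reg_part (xproc x0 \<omega> t))"
    and "Abar \<equiv> measure_pmf.expectation P (\<lambda>p. Amat (Rmat (fst p) (snd p)))"
    and "Bbar \<equiv> measure_pmf.expectation P (\<lambda>p. Bmat (Rmat (fst p) (snd p)))"
    and "F \<equiv> (\<lambda>p y. Amat (Rmat (fst p) (snd p)) *v y + Bmat (Rmat (fst p) (snd p)) *v stub_part x0)"
  shows "(\<exists>\<mu>. invariant_distr P F \<mu> \<and> (\<forall>\<nu>. invariant_distr P F \<nu> \<longrightarrow> \<nu> = \<mu>)
              \<and> conv_in_distr \<Omega> xr \<mu>)
         \<and> invertible (mat 1 - Abar)
         \<and> (\<lambda>t. \<integral>\<omega>. xr t \<omega> \<partial>\<Omega>) \<longlonglongrightarrow> matrix_inv (mat 1 - Abar) *v (Bbar *v stub_part x0)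
         \<and> (AE \<omega> in \<Omega>. (\<lambda>t. (1 / real t) *\<^sub>R (\<Sum>i<t. xr i \<omega>)) \<longlonglongrightarrow> matrix_inv (mat 1 - Abar) *v (Bbar *v stub_part x0))"
proof -
  interpret G: stubborn_gossip P x0 "min ws wd"
  proof
    show "min ws wd \<le> pmf P p" for p
      by (cases p) (simp add: P_def wgt_def)
  qed (use ws_pos wd_pos in simp)
  have F_eq: "F = G.F"
    unfolding F_def G.F_def[abs_def] ..
  have xr_eq: "xr = (\<lambda>t. G.fwd t (reg_part x0))"
    unfolding xr_def by (simp add: fun_eq_iff G.reg_part_xproc)
  have Abar_eq: "Abar = G.Abar"
    unfolding Abar_def G.Abar_def by (rule integral_measure_pmf_finite)
  have lim_eq: "matrix_inv (mat 1 - Abar) *v (Bbar *v stub_part x0) = G.mean_limit"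
    unfolding Abar_eq G.mean_limit_def G.cbar_def Bbar_def integral_measure_pmf_finite
    by (simp add: sum_scaleR_matrix_vector_mult)
  show ?thesis
    unfolding lim_eq unfolding F_eq xr_eq Abar_eq \<Omega>_def G.\<Omega>_def[symmetric]
    using G.invariant_distr_limit_law G.invariant_distr_unique G.conv_in_distr_fwd
      G.invertible_I_minus_Abar G.LIMSEQ_integral_fwd G.AE_LIMSEQ_average_fwd
    by blast
qed

end
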